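(* Let $R$ be a unital ring and $E$ a directed graph. If $E$ does not satisfy Condition (NE), then there exists an infinite sequence $\{\mu_n\mu_n^*\}_{n\in\mathbb{N}}$, with each $\mu_n$ a path in $E$, of distinct, pairwise orthogonal idempotents in $(L_R(E))_0$. In this case, $(L_R(E))_0$ is neither left nor right noetherian.
   Context: A directed graph $E=(E^0,E^1,s,r)$ has vertex set $E^0$, edge set $E^1$, source and range maps $s,r\colon E^1\to E^0$. A path is a sequence of edges $f_1\cdots f_n$ with $s(f_{i+1})=r(f_i)$, of length $\mathrm{len}=n$; a cycle is a path with $s(f_1)=r(f_n)$ and $s(f_i)\neq s(f_1)$ for $2\le i\le n$; it has an exit if some edge $f$ satisfies $s(f)=s(f_i)$ for some $i$ with $f\neq f_i$. Condition (NE): no cycle has an exit. The Leavitt path algebra $L_R(E)$ is the $R$-algebra generated by $v\in E^0$, $f,f^*$ ($f\in E^1$), with $R$ commuting with generators, subject to $v_iv_j=\delta_{i,j}v_i$; $s(f)f=fr(f)=f$, $r(f)f^*=f^*s(f)=f^*$; $f^*f'=\delta_{f,f'}r(f)$; and $\sum_{s(f)=v}ff^*=v$ whenever $s^{-1}(v)$ is nonempty and finite. For a path $\alpha=f_1\cdots f_n$, $\alpha^*=f_n^*\cdots f_1^*$. Every element of $L_R(E)$ is a finite sum $\sum r_i\alpha_i\beta_i^*$ with $r_i\in R$, $\alpha_i,\beta_i$ paths (vertices allowed as length-0 paths); $(L_R(E))_0$ denotes the degree-zero component of the canonical $\mathbb{Z}$-grading, i.e. the set of such sums with $\mathrm{len}(\alpha_i)=\mathrm{len}(\beta_i)$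 for all $i$. *)

theory Defs
  imports "HOL-Algebra.QuotRing"
begin

definition graph :: "'v set \<Rightarrow> 'e set \<Rightarrow> ('e \<Rightarrow> 'v) \<Rightarrow> ('e \<Rightarrow> 'v) \<Rightarrow> bool" where
  "graph E0 E1 s r \<longleftrightarrow> s ` E1 \<subseteq> E0 \<and> r ` E1 \<subseteq> E0"

definition edge_path :: "'e set \<Rightarrow> ('e \<Rightarrow> 'v) \<Rightarrow> ('e \<Rightarrow> 'v) \<Rightarrow> 'e list \<Rightarrow> bool" where
  "edge_path E1 s r es \<longleftrightarrow> es \<noteq> [] \<and> set es \<subseteq> E1 \<and>
     (\<forall>i. Suc i < length es \<longrightarrow> s (es ! Suc i) = r (es ! i))"

text \<open>A path in general (vertices allowed as paths of length 0) is represented as a pair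
  (v, es): either es = [] and the path is the vertex v, or es is an edge path starting at v.\<close>

definition is_path :: "'v set \<Rightarrow> 'e set \<Rightarrow> ('e \<Rightarrow> 'v) \<Rightarrow> ('e \<Rightarrow> 'v) \<Rightarrow> 'v \<times> 'e list \<Rightarrow> bool" where
  "is_path E0 E1 s r p \<longleftrightarrow> fst p \<in> E0 \<and>
     (snd p = [] \<or> (edge_path E1 s r (snd p) \<and> s (hd (snd p)) = fst p))"

definition plen :: "'v \<times> 'e list \<Rightarrow> nat" where
  "plen p = length (snd p)"

definition is_cycle :: "'e set \<Rightarrow> ('e \<Rightarrow> 'v) \<Rightarrow> ('e \<Rightarrow> 'v) \<Rightarrow> 'e list \<Rightarrow> bool" where
  "is_cycle E1 s r c \<longleftrightarrow> edge_path E1 s r c \<and> s (c ! 0) = r (last c) \<and>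
     (\<forall>i. 0 < i \<and> i < length c \<longrightarrow> s (c ! i) \<noteq> s (c ! 0))"

definition has_exit :: "'e set \<Rightarrow> ('e \<Rightarrow> 'v) \<Rightarrow> 'e list \<Rightarrow> bool" where
  "has_exit E1 s c \<longleftrightarrow> (\<exists>f\<in>E1. \<exists>i<length c. s f = s (c ! i) \<and> f \<noteq> c ! i)"

definition cond_NE :: "'e set \<Rightarrow> ('e \<Rightarrow> 'v) \<Rightarrow> ('e \<Rightarrow> 'v) \<Rightarrow> bool" where
  "cond_NE E1 s r \<longleftrightarrow> (\<forall>c. is_cycle E1 s r c \<longrightarrow> \<not> has_exit E1 s c)"

text \<open>Generators: vertices v, edges f, ghost edges f*.\<close>

datatype ('v, 'e) gen = V 'v | Ed 'e | Gh 'e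

definition gens :: "'v set \<Rightarrow> 'e set \<Rightarrow> ('v, 'e) gen set" where
  "gens E0 E1 = V ` E0 \<union> Ed ` E1 \<union> Gh ` E1"

text \<open>Free (unital) R-algebra on the generators, R commuting with the generators:
  finitely supported coefficient functions on words in the generators, with convolution
  product (the monoid ring of the free monoid over R).\<close>

definition free_alg :: "('r, 'm) ring_scheme \<Rightarrow> 'v set \<Rightarrow> 'e set
    \<Rightarrow> (('v, 'e) gen list \<Rightarrow> 'r) ring" where
  "free_alg R E0 E1 = \<lparr>
     carrier = {x. (\<forall>w. x w \<in> carrier R) \<and> finite {w. x w \<noteq> \<zero>\<^bsub>R\<^esub>}
                   \<and> (\<forall>w. x w \<noteq> \<zero>\<^bsub>R\<^esub> \<longrightarrow> set w \<subseteq> gens E0 E1)},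
     monoid.mult = (\<lambda>x y w. finsum R (\<lambda>(u, v). x u \<otimes>\<^bsub>R\<^esub> y v) {(u, v). u @ v = w}),
     one = (\<lambda>w. if w = [] then \<one>\<^bsub>R\<^esub> else \<zero>\<^bsub>R\<^esub>),
     zero = (\<lambda>w. \<zero>\<^bsub>R\<^esub>),
     add = (\<lambda>x y w. x w \<oplus>\<^bsub>R\<^esub> y w) \<rparr>"

definition wmono :: "('r, 'm) ring_scheme \<Rightarrow> ('v, 'e) gen list \<Rightarrow> 'r \<Rightarrow> (('v, 'e) gen list \<Rightarrow> 'r)" where
  "wmono R w c = (\<lambda>u. if u = w then c else \<zero>\<^bsub>R\<^esub>)"

definition rel2 :: "('r, 'm) ring_scheme \<Rightarrow> ('v, 'e) gen list \<Rightarrow> ('v, 'e) gen list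
    \<Rightarrow> (('v, 'e) gen list \<Rightarrow> 'r)" where
  "rel2 R w1 w2 = (\<lambda>u. if u = w1 then \<one>\<^bsub>R\<^esub> else if u = w2 then \<ominus>\<^bsub>R\<^esub> \<one>\<^bsub>R\<^esub> else \<zero>\<^bsub>R\<^esub>)"

definition ck_rel :: "('r, 'm) ring_scheme \<Rightarrow> 'e set \<Rightarrow> ('e \<Rightarrow> 'v) \<Rightarrow> 'v
    \<Rightarrow> (('v, 'e) gen list \<Rightarrow> 'r)" where
  "ck_rel R E1 s v = (\<lambda>u. if u = [V v] then \<ominus>\<^bsub>R\<^esub> \<one>\<^bsub>R\<^esub>
      else if (\<exists>f\<in>E1. s f = v \<and> u = [Ed f, Gh f]) then \<one>\<^bsub>R\<^esub> else \<zero>\<^bsub>R\<^esub>)"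

definition leavitt_rels :: "('r, 'm) ring_scheme \<Rightarrow> 'v set \<Rightarrow> 'e set \<Rightarrow> ('e \<Rightarrow> 'v) \<Rightarrow> ('e \<Rightarrow> 'v)
    \<Rightarrow> (('v, 'e) gen list \<Rightarrow> 'r) set" where
  "leavitt_rels R E0 E1 s r =
      {wmono R [V v, V u] \<one>\<^bsub>R\<^esub> | v u. v \<in> E0 \<and> u \<in> E0 \<and> v \<noteq> u}
    \<union> {rel2 R [V v, V v] [V v] | v. v \<in> E0}
    \<union> {rel2 R [V (s f), Ed f] [Ed f] | f. f \<in> E1}
    \<union> {rel2 R [Ed f, V (r f)] [Ed f] | f. f \<in> E1}
    \<union> {rel2 R [V (r f), Gh f] [Gh f] | f. f \<in> E1}
    \<union> {rel2 R [Gh f, V (s f)] [Gh f] | f. f \<in> E1}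
    \<union> {rel2 R [Gh f, Ed f] [V (r f)] | f. f \<in> E1}
    \<union> {wmono R [Gh f, Ed g] \<one>\<^bsub>R\<^esub> | f g. f \<in> E1 \<and> g \<in> E1 \<and> f \<noteq> g}
    \<union> {ck_rel R E1 s v | v. v \<in> E0 \<and> {f \<in> E1. s f = v} \<noteq> {} \<and> finite {f \<in> E1. s f = v}}"

definition leavitt_ideal :: "('r, 'm) ring_scheme \<Rightarrow> 'v set \<Rightarrow> 'e set \<Rightarrow> ('e \<Rightarrow> 'v) \<Rightarrow> ('e \<Rightarrow> 'v) \<Rightarrow> (('v, 'e) gen list \<Rightarrow> 'r) set" where
  "leavitt_ideal R E0 E1 s r = genideal (free_alg R E0 E1) (leavitt_rels R E0 E1 s r)"

text \<open>L_R(E), realised inside the quotient of the unital free algebra by the Leavitt relations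
  (L_R(E) is the image of the augmentation ideal; all elements considered below lie in it).\<close>

definition LPA :: "('r, 'm) ring_scheme \<Rightarrow> 'v set \<Rightarrow> 'e set \<Rightarrow> ('e \<Rightarrow> 'v) \<Rightarrow> ('e \<Rightarrow> 'v) \<Rightarrow> (('v, 'e) gen list \<Rightarrow> 'r) set ring" where
  "LPA R E0 E1 s r = free_alg R E0 E1 Quot leavitt_ideal R E0 E1 s r"

definition cls :: "('r, 'm) ring_scheme \<Rightarrow> 'v set \<Rightarrow> 'e set \<Rightarrow> ('e \<Rightarrow> 'v) \<Rightarrow> ('e \<Rightarrow> 'v) \<Rightarrow> (('v, 'e) gen list \<Rightarrow> 'r) \<Rightarrow> (('v, 'e) gen list \<Rightarrow> 'r) set" where
  "cls R E0 E1 s r x = leavitt_ideal R E0 E1 s r +>\<^bsub>free_alg R E0 E1\<^esub> x"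

definition pword :: "'v \<times> 'e list \<Rightarrow> ('v, 'e) gen list" where
  "pword p = (if snd p = [] then [V (fst p)] else map Ed (snd p))"

definition pword_star :: "'v \<times> 'e list \<Rightarrow> ('v, 'e) gen list" where
  "pword_star p = (if snd p = [] then [V (fst p)] else map Gh (rev (snd p)))"

definition LPA0 :: "('r, 'm) ring_scheme \<Rightarrow> 'v set \<Rightarrow> 'e set \<Rightarrow> ('e \<Rightarrow> 'v) \<Rightarrow> ('e \<Rightarrow> 'v) \<Rightarrow> (('v, 'e) gen list \<Rightarrow> 'r) set set" where
  "LPA0 R E0 E1 s r = {cls R E0 E1 s r x | x. \<exists>(n::nat) c a b.
       (\<forall>i<n. c i \<in> carrier R \<and> is_path E0 E1 s r (a i) \<and> is_path E0 E1 s r (b i)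
              \<and> plen (a i) = plen (b i)) \<and>
       x = (\<lambda>w. finsum R (\<lambda>i. if w = pword (a i) @ pword_star (b i) then c i else \<zero>\<^bsub>R\<^esub>) {..<n})}"

definition left_ideal_of where
  "left_ideal_of L S J \<longleftrightarrow> J \<subseteq> S \<and> additive_subgroup J L \<and> (\<forall>x\<in>S. \<forall>a\<in>J. x \<otimes>\<^bsub>L\<^esub> a \<in> J)"

definition right_ideal_of where
  "right_ideal_of L S J \<longleftrightarrow> J \<subseteq> S \<and> additive_subgroup J L \<and> (\<forall>x\<in>S. \<forall>a\<in>J. a \<otimes>\<^bsub>L\<^esub> x \<in> J)"

definition left_noetherian where
  "left_noetherian L S \<longleftrightarrow> (\<forall>J :: nat \<Rightarrow> _ set.
     (\<forall>n. left_ideal_of L S (J n)) \<and> (\<forall>n. J n \<subseteq> J (Suc n)) \<longrightarrow> (\<exists>N. \<forall>n\<ge>N. J n = J N))"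

definition right_noetherian where
  "right_noetherian L S \<longleftrightarrow> (\<forall>J :: nat \<Rightarrow> _ set.
     (\<forall>n. right_ideal_of L S (J n)) \<and> (\<forall>n. J n \<subseteq> J (Suc n)) \<longrightarrow> (\<exists>N. \<forall>n\<ge>N. J n = J N))"

end

theory Submission
  imports Defs "HOL-Library.Sublist"
begin

text \<open>Since E violates (NE), it has a cycle c with an exit f. Let mu n be the path that runs
  n times around c and then leaves it through f. The elements mu n (mu n)* lie in the degree-zero
  part L0, are idempotent, and are pairwise orthogonal: for m < n the paths mu m and mu n first
  differ where one takes f and the other an edge of c, and e* g = 0 for distinct edges e, g.
  They are nonzero because L_R(E) acts on R-valued functions on infinite runs through E, and
  mu mu* fixes the indicator function of a run beginning with mu. With the partial sums
  E k = mu 0 (mu 0)* + ... + mu (k-1) (mu (k-1))*, the sets {a \<in> L0. a E k = a} form a strictly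
  ascending chain of left ideals of L0, and {a \<in> L0. E k a = a} one of right ideals. That
  these are ideals uses that L0 is a subring: it is spanned by the monomials alpha v beta* with
  len alpha = len beta, and a product of two such monomials reduces to one of them or to 0.\<close>

section \<open>Convolution of finitely supported functions on words\<close>

definition splits :: "'a list \<Rightarrow> ('a list \<times> 'a list) set" where
  "splits w = {(u, v). u @ v = w}"

lemma splits_eq_image: "splits w = (\<lambda>k. (take k w, drop k w)) ` {..length w}"
proof -
  have "(u, v) \<in> (\<lambda>k. (take k w, drop k w)) ` {..length w}" if "u @ v = w" for u v
    using that by (auto intro!: image_eqI[where x="length u"])
  then show ?thesis unfolding splits_def by auto
qed

lemma finite_splits [simp]: "finite (splits w)"
  by (simp add: splits_eq_image)

definition supp :: "('r, 'm) ring_scheme \<Rightarrow> ('a \<Rightarrow> 'r) \<Rightarrow> 'a set" where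
  "supp R x = {w. x w \<noteq> \<zero>\<^bsub>R\<^esub>}"

context ring
begin

lemma finsum_Times:
  assumes "finite A" "finite B" "\<And>u v. u \<in> A \<Longrightarrow> v \<in> B \<Longrightarrow> f (u, v) \<in> carrier R"
  shows "finsum R f (A \<times> B) = finsum R (\<lambda>u. finsum R (\<lambda>v. f (u, v)) B) A"
proof -
  have "A \<times> B = (\<Union>u\<in>A. {u} \<times> B)" by auto
  then have "finsum R f (A \<times> B) = finsum R f (\<Union>u\<in>A. {u} \<times> B)" by simp
  also have "\<dots> = finsum R (\<lambda>u. finsum R f ({u} \<times> B)) A"
    by (rule add.finprod_UN_disjoint) (use assms in \<open>auto simp: pairwise_def disjnt_def\<close>)
  also have "\<dots> = finsum R (\<lambda>u. finsum R (\<lambda>v. f (u, v)) B) A"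
  proof (rule add.finprod_cong')
    fix u assume u: "u \<in> A"
    have "{u} \<times> B = Pair u ` B" by auto
    then show "finsum R f ({u} \<times> B) = finsum R (\<lambda>v. f (u, v)) B"
      using assms u by (simp only:) (rule finsum_reindex, auto simp: inj_on_def Pi_def)
  qed (use assms in \<open>auto simp: Pi_def\<close>)
  finally show ?thesis .
qed

lemma finsum_lessThan_add:
  fixes n m :: nat
  assumes "\<And>i. f i \<in> carrier R"
  shows "finsum R f {..<n + m} = finsum R f {..<n} \<oplus> finsum R (\<lambda>i. f (i + n)) {..<m}"
proof (induction m)
  case 0
  then show ?case using assms by (simp add: Pi_def)
next
  case (Suc m)
  have "finsum R f {..<n + Suc m} = f (n + m) \<oplus> (finsum R f {..<n} \<oplus> finsum R (\<lambda>i. f (i + n)) {..<m})"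
    using assms Suc by (simp add: lessThan_Suc Pi_def)
  also have "\<dots> = finsum R f {..<n} \<oplus> finsum R (\<lambda>i. f (i + n)) {..<Suc m}"
    using assms by (simp add: lessThan_Suc Pi_def a_lcomm add.commute)
  finally show ?case .
qed

definition fin_supp :: "('c \<Rightarrow> 'a) \<Rightarrow> bool" where
  "fin_supp x \<longleftrightarrow> (\<forall>w. x w \<in> carrier R) \<and> finite (supp R x)"

definition conv :: "('d list \<Rightarrow> 'a) \<Rightarrow> ('d list \<Rightarrow> 'a) \<Rightarrow> 'd list \<Rightarrow> 'a" where
  "conv x y = (\<lambda>w. finsum R (\<lambda>(u, v). x u \<otimes> y v) (splits w))"

definition lin_ext :: "('c \<Rightarrow> 'a) \<Rightarrow> ('c \<Rightarrow> 'a) \<Rightarrow> 'a" where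
  "lin_ext G x = finsum R (\<lambda>w. x w \<otimes> G w) (supp R x)"

lemma lin_ext_closed: "fin_supp x \<Longrightarrow> (\<And>w. G w \<in> carrier R) \<Longrightarrow> lin_ext G x \<in> carrier R"
  unfolding lin_ext_def fin_supp_def by (auto intro!: finsum_closed)

lemma lin_ext_superset:
  assumes "finite W" "supp R x \<subseteq> W" "\<And>w. x w \<in> carrier R" "\<And>w. G w \<in> carrier R"
  shows "lin_ext G x = finsum R (\<lambda>w. x w \<otimes> G w) W"
  unfolding lin_ext_def
  by (rule add.finprod_mono_neutral_cong_left) (use assms in \<open>auto simp: supp_def\<close>)

lemma lin_ext_cong:
  "fin_supp x \<Longrightarrow> (\<And>w. G' w \<in> carrier R) \<Longrightarrow> (\<And>w. w \<in> supp R x \<Longrightarrow> G w = G' w)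
    \<Longrightarrow> lin_ext G x = lin_ext G' x"
  unfolding lin_ext_def by (rule add.finprod_cong) (auto simp: Pi_def fin_supp_def)

lemma lin_ext_zero: "fin_supp x \<Longrightarrow> lin_ext (\<lambda>w. \<zero>) x = \<zero>"
  unfolding lin_ext_def by (rule add.finprod_one_eqI) (auto simp: fin_supp_def)

lemma lin_ext_add:
  assumes "fin_supp a" "fin_supp b" "\<And>w. G w \<in> carrier R"
  shows "lin_ext G (\<lambda>w. a w \<oplus> b w) = lin_ext G a \<oplus> lin_ext G b"
proof -
  define W where "W = supp R a \<union> supp R b"
  have fW: "finite W" using assms by (simp add: W_def fin_supp_def)
  have ab: "\<And>w. a w \<in> carrier R" "\<And>w. b w \<in> carrier R" using assms by (auto simp: fin_supp_def)
  have "lin_ext G (\<lambda>w. a w \<oplus> b w) = finsum R (\<lambda>w. (a w \<oplus> b w) \<otimes> G w) W"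
    by (rule lin_ext_superset) (use fW ab assms in \<open>auto simp: W_def supp_def\<close>)
  also have "\<dots> = finsum R (\<lambda>w. a w \<otimes> G w \<oplus> b w \<otimes> G w) W"
    by (rule add.finprod_cong') (use ab assms in \<open>auto simp: l_distr\<close>)
  also have "\<dots> = finsum R (\<lambda>w. a w \<otimes> G w) W \<oplus> finsum R (\<lambda>w. b w \<otimes> G w) W"
    by (rule finsum_addf) (use ab assms in auto)
  also have "\<dots> = lin_ext G a \<oplus> lin_ext G b"
    using lin_ext_superset[of W a G] lin_ext_superset[of W b G] fW ab assms
    by (simp add: W_def)
  finally show ?thesis .
qed

lemma conv_closed: "(\<And>w. x w \<in> carrier R) \<Longrightarrow> (\<And>w. y w \<in> carrier R) \<Longrightarrow> conv x y w \<in> carrier R"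
  unfolding conv_def by (auto intro!: finsum_closed)

lemma supp_conv:
  assumes "\<And>w. x w \<in> carrier R" "\<And>w. y w \<in> carrier R"
  shows "supp R (conv x y) \<subseteq> (\<lambda>(u, v). u @ v) ` (supp R x \<times> supp R y)"
proof
  fix w assume w: "w \<in> supp R (conv x y)"
  show "w \<in> (\<lambda>(u, v). u @ v) ` (supp R x \<times> supp R y)"
  proof (rule ccontr)
    assume nw: "w \<notin> (\<lambda>(u, v). u @ v) ` (supp R x \<times> supp R y)"
    have "conv x y w = \<zero>" unfolding conv_def
    proof (rule add.finprod_one_eqI)
      fix p assume "p \<in> splits w"
      then obtain u v where p: "p = (u, v)" "u @ v = w" by (auto simp: splits_def)
      then have "x u = \<zero> \<or> y v = \<zero>" using nw by (force simp: supp_def)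
      then show "(\<lambda>(u, v). x u \<otimes> y v) p = \<zero>" using p assms by auto
    qed
    then show False using w by (simp add: supp_def)
  qed
qed

lemma fin_supp_conv: "fin_supp x \<Longrightarrow> fin_supp y \<Longrightarrow> fin_supp (conv x y)"
  unfolding fin_supp_def using supp_conv conv_closed
  by (metis (no_types, lifting) finite_SigmaI finite_imageI finite_subset)

lemma lin_ext_conv_eq_finsum_Times:
  assumes a: "fin_supp a" and b: "fin_supp b" and G: "\<And>w. G w \<in> carrier R"
  shows "lin_ext G (conv a b) = finsum R (\<lambda>(u, v). a u \<otimes> b v \<otimes> G (u @ v)) (supp R a \<times> supp R b)"
proof -
  define A where "A = supp R a"
  define B where "B = supp R b"
  define W where "W = (\<lambda>(u, v). u @ v) ` (A \<times> B)"
  define f where "f = (\<lambda>(u, v). a u \<otimes> b v \<otimes> G (u @ v))"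
  have ac: "\<And>w. a w \<in> carrier R" and bc: "\<And>w. b w \<in> carrier R"
    using a b by (auto simp: fin_supp_def)
  have fW: "finite W" using a b by (simp add: W_def A_def B_def fin_supp_def)
  have fc: "f p \<in> carrier R" for p using ac bc G by (auto simp: f_def split: prod.splits)
  have "lin_ext G (conv a b) = finsum R (\<lambda>w. conv a b w \<otimes> G w) W"
    by (rule lin_ext_superset)
       (use fW supp_conv[of a b, OF ac bc] G conv_closed[of a b, OF ac bc] in \<open>auto simp: W_def A_def B_def\<close>)
  also have "\<dots> = finsum R (\<lambda>w. finsum R f (splits w \<inter> (A \<times> B))) W"
  proof (rule add.finprod_cong')
    fix w assume "w \<in> W"
    have "conv a b w = finsum R (\<lambda>(u, v). a u \<otimes> b v) (splits w \<inter> (A \<times> B))"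
      unfolding conv_def
      by (rule add.finprod_mono_neutral_cong_right)
         (use ac bc in \<open>auto simp: A_def B_def supp_def\<close>)
    also have "\<dots> \<otimes> G w = finsum R (\<lambda>p. (\<lambda>(u, v). a u \<otimes> b v) p \<otimes> G w) (splits w \<inter> (A \<times> B))"
      by (rule finsum_ldistr) (use ac bc G in auto)
    also have "\<dots> = finsum R f (splits w \<inter> (A \<times> B))"
      by (rule add.finprod_cong') (use fc in \<open>auto simp: f_def splits_def\<close>)
    finally show "conv a b w \<otimes> G w = finsum R f (splits w \<inter> (A \<times> B))" .
  qed (use fc in auto)
  also have "\<dots> = finsum R f (\<Union>w\<in>W. splits w \<inter> (A \<times> B))"
    by (rule add.finprod_UN_disjoint[symmetric])
       (use fW fc finite_splits in \<open>auto simp: pairwise_def disjnt_def splits_def\<close>)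
  also have "(\<Union>w\<in>W. splits w \<inter> (A \<times> B)) = A \<times> B"
    by (auto simp: W_def splits_def)
  finally show ?thesis by (simp add: f_def A_def B_def)
qed

lemma lin_ext_conv:
  assumes a: "fin_supp a" and b: "fin_supp b" and G: "\<And>w. G w \<in> carrier R"
  shows "lin_ext G (conv a b) = lin_ext (\<lambda>u. lin_ext (\<lambda>v. G (u @ v)) b) a"
proof -
  have ac: "\<And>w. a w \<in> carrier R" and bc: "\<And>w. b w \<in> carrier R"
    using a b by (auto simp: fin_supp_def)
  have "lin_ext G (conv a b)
      = finsum R (\<lambda>u. finsum R (\<lambda>v. a u \<otimes> b v \<otimes> G (u @ v)) (supp R b)) (supp R a)"
    unfolding lin_ext_conv_eq_finsum_Times[OF a b G]
    using finsum_Times[of "supp R a" "supp R b" "\<lambda>(u, v). a u \<otimes> b v \<otimes> G (u @ v)"] a b ac bc G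
    by (simp add: fin_supp_def)
  also have "\<dots> = finsum R (\<lambda>u. a u \<otimes> lin_ext (\<lambda>v. G (u @ v)) b) (supp R a)"
  proof (rule add.finprod_cong')
    fix u
    have "a u \<otimes> lin_ext (\<lambda>v. G (u @ v)) b = finsum R (\<lambda>v. a u \<otimes> (b v \<otimes> G (u @ v))) (supp R b)"
      unfolding lin_ext_def by (rule finsum_rdistr) (use ac bc G b in \<open>auto simp: fin_supp_def\<close>)
    then show "finsum R (\<lambda>v. a u \<otimes> b v \<otimes> G (u @ v)) (supp R b) = a u \<otimes> lin_ext (\<lambda>v. G (u @ v)) b"
      using ac bc G by (simp add: m_assoc)
  qed (use ac b G in \<open>auto intro!: lin_ext_closed\<close>)
  finally show ?thesis by (simp add: lin_ext_def)
qed

lemma conv_eq_lin_ext: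
  assumes x: "fin_supp x" and y: "\<And>w. y w \<in> carrier R"
  shows "conv x y t = lin_ext (\<lambda>p. if prefix p t then y (drop (length p) t) else \<zero>) x"
    (is "_ = lin_ext ?G x")
proof -
  have xc: "\<And>w. x w \<in> carrier R" using x by (simp add: fin_supp_def)
  define P where "P = fst ` splits t"
  have fP: "finite P" by (simp add: P_def)
  have "splits t = (\<lambda>p. (p, drop (length p) t)) ` P"
    by (force simp: P_def splits_def image_def)
  then have "conv x y t = finsum R (\<lambda>(u, v). x u \<otimes> y v) ((\<lambda>p. (p, drop (length p) t)) ` P)"
    by (simp add: conv_def)
  also have "\<dots> = finsum R (\<lambda>p. x p \<otimes> y (drop (length p) t)) P"
    by (subst finsum_reindex) (use xc y in \<open>auto simp: inj_on_def\<close>)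
  also have "\<dots> = finsum R (\<lambda>p. x p \<otimes> ?G p) P"
    by (rule add.finprod_cong') (use xc y in \<open>auto simp: P_def splits_def prefix_def\<close>)
  also have "\<dots> = finsum R (\<lambda>p. x p \<otimes> ?G p) (supp R x)"
    by (rule add.finprod_mono_neutral_cong)
       (use x xc y fP in \<open>auto simp: fin_supp_def supp_def P_def splits_def image_def prefix_def\<close>)
  finally show ?thesis by (simp add: lin_ext_def)
qed

lemma conv_assoc:
  assumes a: "fin_supp a" and b: "fin_supp b" and c: "fin_supp c"
  shows "conv (conv a b) c = conv a (conv b c)"
proof
  fix t
  have cc: "\<And>w. c w \<in> carrier R" using c by (simp add: fin_supp_def)
  define G where "G = (\<lambda>p. if prefix p t then c (drop (length p) t) else \<zero>)"
  have Gc: "G w \<in> carrier R" for w using cc by (simp add: G_def)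
  have "conv (conv a b) c t = lin_ext (\<lambda>u. lin_ext (\<lambda>v. G (u @ v)) b) a"
    unfolding conv_eq_lin_ext[OF fin_supp_conv[OF a b] cc] G_def[symmetric] by (rule lin_ext_conv[OF a b Gc])
  also have "\<dots> = lin_ext (\<lambda>p. if prefix p t then conv b c (drop (length p) t) else \<zero>) a"
  proof (rule lin_ext_cong[OF a])
    fix u
    show "(if prefix u t then conv b c (drop (length u) t) else \<zero>) \<in> carrier R"
      using conv_closed b cc by (auto simp: fin_supp_def)
    show "lin_ext (\<lambda>v. G (u @ v)) b = (if prefix u t then conv b c (drop (length u) t) else \<zero>)"
    proof (cases "prefix u t")
      case True
      then obtain t' where t: "t = u @ t'" by (auto simp: prefix_def)
      have "lin_ext (\<lambda>v. G (u @ v)) b = conv b c t'"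
        unfolding conv_eq_lin_ext[OF b cc] by (rule lin_ext_cong[OF b]) (auto simp: G_def t cc)
      then show ?thesis using t by simp
    next
      case False
      then have "G (u @ v) = \<zero>" for v by (auto simp: G_def prefix_def)
      then show ?thesis using False lin_ext_zero[OF b] by simp
    qed
  qed
  also have "\<dots> = conv a (conv b c) t"
    by (rule conv_eq_lin_ext[OF a, symmetric]) (use conv_closed b cc in \<open>auto simp: fin_supp_def\<close>)
  finally show "conv (conv a b) c t = conv a (conv b c) t" .
qed

lemma conv_one_left:
  assumes x: "fin_supp x"
  shows "conv (\<lambda>w. if w = [] then \<one> else \<zero>) x = x"
proof
  fix t
  have xc: "\<And>w. x w \<in> carrier R" using x by (simp add: fin_supp_def)
  have "conv (\<lambda>w. if w = [] then \<one> else \<zero>) x t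
      = lin_ext (\<lambda>p. if prefix p t then x (drop (length p) t) else \<zero>) (\<lambda>w. if w = [] then \<one> else \<zero>)"
    by (rule conv_eq_lin_ext) (auto simp: fin_supp_def supp_def xc)
  also have "\<dots> = x t"
    by (subst lin_ext_superset[where W="{[]}"]) (auto simp: supp_def xc)
  finally show "conv (\<lambda>w. if w = [] then \<one> else \<zero>) x t = x t" .
qed

lemma conv_one_right:
  assumes x: "fin_supp x"
  shows "conv x (\<lambda>w. if w = [] then \<one> else \<zero>) = x"
proof
  fix t
  have xc: "\<And>w. x w \<in> carrier R" using x by (simp add: fin_supp_def)
  have fx: "finite (supp R x)" using x by (simp add: fin_supp_def)
  have "conv x (\<lambda>w. if w = [] then \<one> else \<zero>) t = lin_ext (\<lambda>p. if p = t then \<one> else \<zero>) x"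
    by (subst conv_eq_lin_ext[OF x]) (auto intro!: lin_ext_cong[OF x] simp: prefix_def)
  also have "\<dots> = finsum R (\<lambda>p. if p = t then x p else \<zero>) (insert t (supp R x))"
    by (subst lin_ext_superset[where W="insert t (supp R x)"])
       (use fx xc in \<open>auto intro!: add.finprod_cong'\<close>)
  also have "\<dots> = x t"
    by (rule add.finprod_singleton_swap) (use fx xc in auto)
  finally show "conv x (\<lambda>w. if w = [] then \<one> else \<zero>) t = x t" .
qed

lemma conv_add_left:
  assumes "\<And>w. x w \<in> carrier R" "\<And>w. y w \<in> carrier R" "\<And>w. z w \<in> carrier R"
  shows "conv (\<lambda>w. x w \<oplus> y w) z = (\<lambda>w. conv x z w \<oplus> conv y z w)"
  unfolding conv_def
  by (rule ext, subst finsum_addf[symmetric]) (auto intro!: add.finprod_cong' simp: assms l_distr)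

lemma conv_add_right:
  assumes "\<And>w. x w \<in> carrier R" "\<And>w. y w \<in> carrier R" "\<And>w. z w \<in> carrier R"
  shows "conv z (\<lambda>w. x w \<oplus> y w) = (\<lambda>w. conv z x w \<oplus> conv z y w)"
  unfolding conv_def
  by (rule ext, subst finsum_addf[symmetric]) (auto intro!: add.finprod_cong' simp: assms r_distr)

lemma free_alg_simps:
  "carrier (free_alg R E0 E1) = {x. fin_supp x \<and> (\<forall>w. x w \<noteq> \<zero> \<longrightarrow> set w \<subseteq> gens E0 E1)}"
  "mult (free_alg R E0 E1) = conv"
  "one (free_alg R E0 E1) = (\<lambda>w. if w = [] then \<one> else \<zero>)"
  "zero (free_alg R E0 E1) = (\<lambda>w. \<zero>)"
  "add (free_alg R E0 E1) = (\<lambda>x y w. x w \<oplus> y w)"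
  by (auto simp: free_alg_def conv_def splits_def fin_supp_def supp_def fun_eq_iff)

lemma free_alg_carrier_fin_supp: "x \<in> carrier (free_alg R E0 E1) \<Longrightarrow> fin_supp x"
  by (simp add: free_alg_simps)

lemma conv_free_alg_closed:
  assumes "x \<in> carrier (free_alg R E0 E1)" "y \<in> carrier (free_alg R E0 E1)"
  shows "conv x y \<in> carrier (free_alg R E0 E1)"
proof -
  have fx: "fin_supp x" "fin_supp y" using assms free_alg_carrier_fin_supp by auto
  have "set w \<subseteq> gens E0 E1" if "conv x y w \<noteq> \<zero>" for w
  proof -
    have "w \<in> supp R (conv x y)" using that by (simp add: supp_def)
    then obtain u v where "w = u @ v" "x u \<noteq> \<zero>" "y v \<noteq> \<zero>"
      using supp_conv[of x y] fx by (auto simp: fin_supp_def supp_def)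
    then show ?thesis using assms by (auto simp: free_alg_simps)
  qed
  then show ?thesis using fin_supp_conv[OF fx] by (simp add: free_alg_simps)
qed

lemma add_free_alg_closed:
  assumes "x \<in> carrier (free_alg R E0 E1)" "y \<in> carrier (free_alg R E0 E1)"
  shows "(\<lambda>w. x w \<oplus> y w) \<in> carrier (free_alg R E0 E1)"
proof -
  have fx: "fin_supp x" "fin_supp y" using assms free_alg_carrier_fin_supp by auto
  have sub: "supp R (\<lambda>w. x w \<oplus> y w) \<subseteq> supp R x \<union> supp R y"
    using fx by (auto simp: supp_def fin_supp_def)
  then have "fin_supp (\<lambda>w. x w \<oplus> y w)"
    using fx by (auto simp: fin_supp_def intro: finite_subset)
  moreover have "set w \<subseteq> gens E0 E1" if "x w \<oplus> y w \<noteq> \<zero>" for w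
    using sub that assms by (auto simp: supp_def free_alg_simps)
  ultimately show ?thesis by (simp add: free_alg_simps)
qed

lemma ring_free_alg: "ring (free_alg R E0 E1)"
proof (rule ringI)
  show "abelian_group (free_alg R E0 E1)"
  proof (rule abelian_groupI)
    fix x assume x: "x \<in> carrier (free_alg R E0 E1)"
    show "\<exists>y\<in>carrier (free_alg R E0 E1). y \<oplus>\<^bsub>free_alg R E0 E1\<^esub> x = \<zero>\<^bsub>free_alg R E0 E1\<^esub>"
    proof
      show "(\<lambda>w. \<ominus> x w) \<in> carrier (free_alg R E0 E1)"
        using x by (auto simp: free_alg_simps fin_supp_def supp_def)
    qed (use x in \<open>auto simp: free_alg_simps fin_supp_def l_neg\<close>)
  next
    fix x y assume "x \<in> carrier (free_alg R E0 E1)" "y \<in> carrier (free_alg R E0 E1)"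
    then show "x \<oplus>\<^bsub>free_alg R E0 E1\<^esub> y \<in> carrier (free_alg R E0 E1)"
      using add_free_alg_closed by (simp add: free_alg_simps(5))
  qed (auto simp: free_alg_simps fin_supp_def supp_def a_ac)
  show "monoid (free_alg R E0 E1)"
  proof (rule monoidI)
    fix x y assume "x \<in> carrier (free_alg R E0 E1)" "y \<in> carrier (free_alg R E0 E1)"
    then show "x \<otimes>\<^bsub>free_alg R E0 E1\<^esub> y \<in> carrier (free_alg R E0 E1)"
      using conv_free_alg_closed by (simp add: free_alg_simps(2))
  qed (auto simp: free_alg_simps conv_assoc conv_one_left conv_one_right fin_supp_def supp_def)
qed (auto simp: free_alg_simps conv_add_left conv_add_right fin_supp_def)

lemma wmono_carrier:
  "set w \<subseteq> gens E0 E1 \<Longrightarrow> c \<in> carrier R \<Longrightarrow> wmono R w c \<in> carrier (free_alg R E0 E1)"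
  using finite_subset[of "supp R (wmono R w c)" "{w}"]
  by (auto simp: free_alg_simps fin_supp_def supp_def wmono_def)

lemma conv_wmono:
  assumes "c \<in> carrier R" "d \<in> carrier R"
  shows "conv (wmono R u c) (wmono R v d) = wmono R (u @ v) (c \<otimes> d)"
proof
  fix t
  show "conv (wmono R u c) (wmono R v d) t = wmono R (u @ v) (c \<otimes> d) t"
  proof (cases "t = u @ v")
    case True
    have "conv (wmono R u c) (wmono R v d) t
        = finsum R (\<lambda>p. if p = (u, v) then c \<otimes> d else \<zero>) (splits t)"
      unfolding conv_def
    proof (rule add.finprod_cong')
      fix p assume "p \<in> splits t"
      then show "(\<lambda>(a, b). wmono R u c a \<otimes> wmono R v d b) p = (if p = (u, v) then c \<otimes> d else \<zero>)"
        using assms True by (cases p) (auto simp: wmono_def splits_def)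
    qed (use assms in auto)
    also have "\<dots> = c \<otimes> d"
      by (rule add.finprod_singleton_swap[where f="\<lambda>_. c \<otimes> d", simplified])
         (use True assms finite_splits[of t] in \<open>auto simp: splits_def\<close>)
    finally show ?thesis using True by (simp add: wmono_def)
  next
    case False
    have "conv (wmono R u c) (wmono R v d) t = \<zero>"
      unfolding conv_def
      by (rule add.finprod_one_eqI) (use False assms in \<open>auto simp: wmono_def splits_def\<close>)
    then show ?thesis using False by (simp add: wmono_def)
  qed
qed

lemma uminus_free_alg:
  assumes "x \<in> carrier (free_alg R E0 E1)"
  shows "\<ominus>\<^bsub>free_alg R E0 E1\<^esub> x = (\<lambda>w. \<ominus> x w)"
proof -
  interpret F: ring "free_alg R E0 E1" by (rule ring_free_alg)
  show ?thesis
    by (rule F.minus_equality)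
       (use assms in \<open>auto simp: free_alg_simps fin_supp_def supp_def l_neg\<close>)
qed

lemma rel2_eq_minus:
  assumes "w1 \<noteq> w2" "set w1 \<subseteq> gens E0 E1" "set w2 \<subseteq> gens E0 E1"
  shows "rel2 R w1 w2 = wmono R w1 \<one>\<^bsub>R\<^esub> \<ominus>\<^bsub>free_alg R E0 E1\<^esub> wmono R w2 \<one>\<^bsub>R\<^esub>"
  using assms wmono_carrier[of w2 E0 E1 \<one>]
  by (auto simp: a_minus_def uminus_free_alg free_alg_simps rel2_def wmono_def fun_eq_iff)

end

section \<open>The Leavitt path algebra as a quotient\<close>

locale leavitt_graph = ring R for R :: "('r, 'm) ring_scheme" (structure) +
  fixes E0 :: "'v set" and E1 :: "'e set" and s r :: "'e \<Rightarrow> 'v"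
  assumes graph: "graph E0 E1 s r"
begin

abbreviation F where "F \<equiv> free_alg R E0 E1"
abbreviation I where "I \<equiv> leavitt_ideal R E0 E1 s r"
abbreviation L where "L \<equiv> LPA R E0 E1 s r"
abbreviation cl where "cl \<equiv> cls R E0 E1 s r"

lemma source_in_E0: "f \<in> E1 \<Longrightarrow> s f \<in> E0" and range_in_E0: "f \<in> E1 \<Longrightarrow> r f \<in> E0"
  using graph by (auto simp: graph_def)

lemma gens_iff [simp]:
  "V v \<in> gens E0 E1 \<longleftrightarrow> v \<in> E0" "Ed f \<in> gens E0 E1 \<longleftrightarrow> f \<in> E1" "Gh f \<in> gens E0 E1 \<longleftrightarrow> f \<in> E1"
  by (auto simp: gens_def)

lemma leavitt_rels_carrier: "leavitt_rels R E0 E1 s r \<subseteq> carrier F"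
proof -
  have "ck_rel R E1 s v \<in> carrier F" if v: "v \<in> E0" "finite {f \<in> E1. s f = v}" for v
  proof -
    have "supp R (ck_rel R E1 s v) \<subseteq> insert [V v] ((\<lambda>f. [Ed f, Gh f]) ` {f \<in> E1. s f = v})"
      by (auto simp: ck_rel_def supp_def)
    with v show ?thesis
      by (auto simp: free_alg_simps fin_supp_def ck_rel_def intro: finite_subset split: if_splits)
  qed
  moreover have "rel2 R w1 w2 \<in> carrier F"
    if "w1 \<noteq> w2" "set w1 \<subseteq> gens E0 E1" "set w2 \<subseteq> gens E0 E1" for w1 w2
    using that wmono_carrier[of w1 E0 E1 \<one>] wmono_carrier[of w2 E0 E1 \<one>]
    by (simp add: rel2_eq_minus ring.ring_simprules(4)[OF ring_free_alg])
  ultimately show ?thesis unfolding leavitt_rels_def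
    using source_in_E0 range_in_E0 by (auto intro!: wmono_carrier)
qed

sublocale F: ring F
  by (rule ring_free_alg)

lemma ideal_leavitt_ideal: "ideal I F"
  unfolding leavitt_ideal_def by (rule F.genideal_ideal[OF leavitt_rels_carrier])

sublocale I: ideal I F
  by (rule ideal_leavitt_ideal)

sublocale L: ring L
  unfolding LPA_def by (rule I.quotient_is_ring)

lemma leavitt_rels_subset_ideal: "leavitt_rels R E0 E1 s r \<subseteq> I"
  unfolding leavitt_ideal_def by (rule F.genideal_self[OF leavitt_rels_carrier])

lemma cls_carrier: "x \<in> carrier F \<Longrightarrow> cl x \<in> carrier L"
  unfolding cls_def LPA_def FactRing_def using F.a_rcosetsI[OF I.a_subset] by simp

lemma cls_mult: "x \<in> carrier F \<Longrightarrow> y \<in> carrier F \<Longrightarrow> cl x \<otimes>\<^bsub>L\<^esub> cl y = cl (x \<otimes>\<^bsub>F\<^esub> y)"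
  unfolding cls_def LPA_def FactRing_def by (simp add: I.rcoset_mult_add)

lemma cls_add: "x \<in> carrier F \<Longrightarrow> y \<in> carrier F \<Longrightarrow> cl x \<oplus>\<^bsub>L\<^esub> cl y = cl (x \<oplus>\<^bsub>F\<^esub> y)"
  unfolding cls_def LPA_def FactRing_def by (simp add: I.a_rcos_sum)

lemma cls_eq_zero_iff: "x \<in> carrier F \<Longrightarrow> cl x = \<zero>\<^bsub>L\<^esub> \<longleftrightarrow> x \<in> I"
proof -
  assume x: "x \<in> carrier F"
  have "\<zero>\<^bsub>L\<^esub> = I" by (simp add: LPA_def FactRing_def)
  then show ?thesis using I.a_rcos_self[OF x] I.a_rcos_const[of x] by (auto simp: cls_def)
qed

lemma cls_zero: "cl (\<lambda>w. \<zero>) = \<zero>\<^bsub>L\<^esub>"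
  using cls_eq_zero_iff[OF F.zero_closed] I.zero_closed by (simp add: free_alg_simps(4))

lemma cls_eqI: "x \<in> carrier F \<Longrightarrow> y \<in> carrier F \<Longrightarrow> y \<ominus>\<^bsub>F\<^esub> x \<in> I \<Longrightarrow> cl x = cl y"
  unfolding cls_def using I.a_rcos_module_minus[OF F.ring_axioms] I.a_repr_independence'
  by blast

definition gen_word :: "('v, 'e) gen list \<Rightarrow> bool" where
  "gen_word w \<longleftrightarrow> set w \<subseteq> gens E0 E1"

definition word_eq :: "('v, 'e) gen list \<Rightarrow> ('v, 'e) gen list \<Rightarrow> bool" where
  "word_eq x y \<longleftrightarrow> gen_word x \<and> gen_word y \<and> cl (wmono R x \<one>) = cl (wmono R y \<one>)"

definition word_zero :: "('v, 'e) gen list \<Rightarrow> bool" where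
  "word_zero x \<longleftrightarrow> gen_word x \<and> cl (wmono R x \<one>) = \<zero>\<^bsub>L\<^esub>"

lemma gen_word_simps [simp]:
  "gen_word []" "gen_word (a # w) \<longleftrightarrow> a \<in> gens E0 E1 \<and> gen_word w"
  "gen_word (u @ v) \<longleftrightarrow> gen_word u \<and> gen_word v"
  "gen_word (map Ed q) \<longleftrightarrow> set q \<subseteq> E1" "gen_word (map Gh q) \<longleftrightarrow> set q \<subseteq> E1"
  by (auto simp: gen_word_def gens_def)

lemma wmono_free_alg_carrier: "gen_word w \<Longrightarrow> c \<in> carrier R \<Longrightarrow> wmono R w c \<in> carrier F"
  by (simp add: gen_word_def wmono_carrier)

lemma cls_wmono_append:
  assumes "gen_word u" "gen_word w" "c \<in> carrier R" "d \<in> carrier R"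
  shows "cl (wmono R (u @ w) (c \<otimes> d)) = cl (wmono R u c) \<otimes>\<^bsub>L\<^esub> cl (wmono R w d)"
  using assms by (simp add: cls_mult wmono_free_alg_carrier free_alg_simps(2) conv_wmono)

lemma cls_wmono_scale:
  "gen_word w \<Longrightarrow> c \<in> carrier R \<Longrightarrow> cl (wmono R w c) = cl (wmono R [] c) \<otimes>\<^bsub>L\<^esub> cl (wmono R w \<one>)"
  using cls_wmono_append[of "[]" w c \<one>] by simp

lemma word_eq_cls: "word_eq x y \<Longrightarrow> c \<in> carrier R \<Longrightarrow> cl (wmono R x c) = cl (wmono R y c)"
  by (simp add: word_eq_def cls_wmono_scale[of x c] cls_wmono_scale[of y c])

lemma word_zero_cls: "word_zero x \<Longrightarrow> c \<in> carrier R \<Longrightarrow> cl (wmono R x c) = \<zero>\<^bsub>L\<^esub>"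
  by (simp add: word_zero_def cls_wmono_scale[of x c] cls_carrier wmono_free_alg_carrier)

lemma word_eq_refl: "gen_word x \<Longrightarrow> word_eq x x"
  by (simp add: word_eq_def)

lemma word_eq_sym: "word_eq x y \<Longrightarrow> word_eq y x"
  by (simp add: word_eq_def)

lemma word_eq_trans [trans]: "word_eq x y \<Longrightarrow> word_eq y z \<Longrightarrow> word_eq x z"
  by (simp add: word_eq_def)

lemma word_eq_zero: "word_eq x y \<Longrightarrow> word_zero y \<Longrightarrow> word_zero x"
  by (simp add: word_eq_def word_zero_def)

lemma cls_wmono_append3:
  assumes "gen_word u" "gen_word x" "gen_word v"
  shows "cl (wmono R (u @ x @ v) \<one>) = cl (wmono R u \<one>) \<otimes>\<^bsub>L\<^esub> cl (wmono R x \<one>) \<otimes>\<^bsub>L\<^esub> cl (wmono R v \<one>)"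
  using assms cls_wmono_append[of "u @ x" v \<one> \<one>] cls_wmono_append[of u x \<one> \<one>] by simp

lemma word_eq_context:
  "word_eq x y \<Longrightarrow> gen_word u \<Longrightarrow> gen_word v \<Longrightarrow> word_eq (u @ x @ v) (u @ y @ v)"
  by (simp add: word_eq_def cls_wmono_append3)

lemma word_zero_context: "word_zero x \<Longrightarrow> gen_word u \<Longrightarrow> gen_word v \<Longrightarrow> word_zero (u @ x @ v)"
  by (simp add: word_zero_def cls_wmono_append3 cls_carrier wmono_free_alg_carrier)

lemma word_eq_contextI:
  "word_eq x y \<Longrightarrow> gen_word u \<Longrightarrow> gen_word v \<Longrightarrow> w1 = u @ x @ v \<Longrightarrow> w2 = u @ y @ v
    \<Longrightarrow> word_eq w1 w2"
  using word_eq_context by blast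

lemma word_zero_contextI: "word_zero x \<Longrightarrow> gen_word u \<Longrightarrow> gen_word v \<Longrightarrow> w = u @ x @ v \<Longrightarrow> word_zero w"
  using word_zero_context by blast

lemma word_eq_if_rel2:
  assumes "rel2 R w1 w2 \<in> leavitt_rels R E0 E1 s r" "w1 \<noteq> w2" "gen_word w1" "gen_word w2"
  shows "word_eq w1 w2"
  using assms leavitt_rels_subset_ideal rel2_eq_minus[of w1 w2]
    cls_eqI[of "wmono R w2 \<one>" "wmono R w1 \<one>"]
  by (auto simp: word_eq_def gen_word_def wmono_carrier)

lemma word_zero_if_rel:
  assumes "wmono R w \<one> \<in> leavitt_rels R E0 E1 s r" "gen_word w"
  shows "word_zero w"
  using assms leavitt_rels_subset_ideal cls_eq_zero_iff[of "wmono R w \<one>"]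
  by (auto simp: word_zero_def wmono_free_alg_carrier)

lemma word_zero_VV: "v \<in> E0 \<Longrightarrow> u \<in> E0 \<Longrightarrow> v \<noteq> u \<Longrightarrow> word_zero [V v, V u]"
  by (rule word_zero_if_rel) (auto simp: leavitt_rels_def)

lemma word_eq_VV: "v \<in> E0 \<Longrightarrow> word_eq [V v, V v] [V v]"
  by (rule word_eq_if_rel2) (auto simp: leavitt_rels_def)

lemma word_eq_V_Ed: "f \<in> E1 \<Longrightarrow> word_eq [V (s f), Ed f] [Ed f]"
  by (rule word_eq_if_rel2) (auto simp: leavitt_rels_def source_in_E0)

lemma word_eq_Ed_V: "f \<in> E1 \<Longrightarrow> word_eq [Ed f, V (r f)] [Ed f]"
  by (rule word_eq_if_rel2) (auto simp: leavitt_rels_def range_in_E0)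

lemma word_eq_V_Gh: "f \<in> E1 \<Longrightarrow> word_eq [V (r f), Gh f] [Gh f]"
  by (rule word_eq_if_rel2) (auto simp: leavitt_rels_def range_in_E0)

lemma word_eq_Gh_V: "f \<in> E1 \<Longrightarrow> word_eq [Gh f, V (s f)] [Gh f]"
  by (rule word_eq_if_rel2) (auto simp: leavitt_rels_def source_in_E0)

lemma word_eq_Gh_Ed: "f \<in> E1 \<Longrightarrow> word_eq [Gh f, Ed f] [V (r f)]"
  by (rule word_eq_if_rel2) (auto simp: leavitt_rels_def range_in_E0)

lemma word_zero_Gh_Ed: "f \<in> E1 \<Longrightarrow> g \<in> E1 \<Longrightarrow> f \<noteq> g \<Longrightarrow> word_zero [Gh f, Ed g]"
  by (rule word_zero_if_rel) (auto simp: leavitt_rels_def)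

lemma word_zero_V_Ed: "v \<in> E0 \<Longrightarrow> g \<in> E1 \<Longrightarrow> v \<noteq> s g \<Longrightarrow> word_zero [V v, Ed g]"
proof -
  assume a: "v \<in> E0" "g \<in> E1" "v \<noteq> s g"
  have "word_eq [V v, Ed g] [V v, V (s g), Ed g]"
    by (rule word_eq_contextI[OF word_eq_sym[OF word_eq_V_Ed[OF a(2)]], of "[V v]" "[]"])
       (use a source_in_E0 in auto)
  moreover have "word_zero [V v, V (s g), Ed g]"
    by (rule word_zero_contextI[OF word_zero_VV[of v "s g"], of "[]" "[Ed g]"])
       (use a source_in_E0 in auto)
  ultimately show ?thesis by (rule word_eq_zero)
qed

lemma word_zero_Gh_V: "u \<in> E0 \<Longrightarrow> g \<in> E1 \<Longrightarrow> u \<noteq> s g \<Longrightarrow> word_zero [Gh g, V u]"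
proof -
  assume a: "u \<in> E0" "g \<in> E1" "u \<noteq> s g"
  have "word_eq [Gh g, V u] [Gh g, V (s g), V u]"
    by (rule word_eq_contextI[OF word_eq_sym[OF word_eq_Gh_V[OF a(2)]], of "[]" "[V u]"])
       (use a source_in_E0 in auto)
  moreover have "word_zero [Gh g, V (s g), V u]"
    by (rule word_zero_contextI[OF word_zero_VV[of "s g" u], of "[Gh g]" "[]"])
       (use a source_in_E0 in auto)
  ultimately show ?thesis by (rule word_eq_zero)
qed

definition walk :: "'e list \<Rightarrow> bool" where
  "walk es \<longleftrightarrow> set es \<subseteq> E1 \<and> (\<forall>i. Suc i < length es \<longrightarrow> s (es ! Suc i) = r (es ! i))"

lemma walk_Nil [simp]: "walk []"
  by (simp add: walk_def)

lemma walk_Cons: "walk (e # es) \<longleftrightarrow> e \<in> E1 \<and> walk es \<and> (es \<noteq> [] \<longrightarrow> s (hd es) = r e)"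
proof -
  have "(\<forall>i. Suc i < length (e # es) \<longrightarrow> s ((e # es) ! Suc i) = r ((e # es) ! i)) \<longleftrightarrow>
        (es \<noteq> [] \<longrightarrow> s (hd es) = r e) \<and> (\<forall>i. Suc i < length es \<longrightarrow> s (es ! Suc i) = r (es ! i))"
    by (auto simp: hd_conv_nth less_Suc_eq_0_disj nth_Cons split: nat.splits)
  then show ?thesis unfolding walk_def by auto
qed

lemma walk_append:
  "walk (xs @ ys) \<longleftrightarrow> walk xs \<and> walk ys \<and> (xs \<noteq> [] \<and> ys \<noteq> [] \<longrightarrow> s (hd ys) = r (last xs))"
  by (induction xs) (auto simp: walk_Cons)

lemma walk_edges: "walk q \<Longrightarrow> set q \<subseteq> E1"
  by (simp add: walk_def)

lemma edge_path_iff_walk: "edge_path E1 s r es \<longleftrightarrow> es \<noteq> [] \<and> walk es"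
  by (simp add: edge_path_def walk_def)

lemma is_path_iff_walk:
  "is_path E0 E1 s r p \<longleftrightarrow> fst p \<in> E0 \<and> (snd p = [] \<or> snd p \<noteq> [] \<and> walk (snd p) \<and> s (hd (snd p)) = fst p)"
  by (auto simp: is_path_def edge_path_iff_walk)

lemma word_eq_ghost_walk:
  "q \<noteq> [] \<Longrightarrow> walk q \<Longrightarrow> word_eq (map Gh (rev q) @ map Ed q) [V (r (last q))]"
proof (induction q)
  case Nil
  then show ?case by simp
next
  case (Cons e q)
  show ?case
  proof (cases "q = []")
    case True
    then show ?thesis using word_eq_Gh_Ed[of e] Cons.prems by (simp add: walk_Cons)
  next
    case False
    then obtain h q' where q: "q = h # q'" by (cases q) auto
    have e: "e \<in> E1" "walk q" "s h = r e" using Cons.prems q by (auto simp: walk_Cons)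
    have qE: "set q \<subseteq> E1" using e walk_edges by auto
    have "word_eq (map Gh (rev (e # q)) @ map Ed (e # q)) (map Gh (rev q) @ [V (r e)] @ map Ed q)"
      by (rule word_eq_contextI[OF word_eq_Gh_Ed[OF e(1)], of "map Gh (rev q)" "map Ed q"])
         (use e qE in auto)
    also have "word_eq \<dots> (map Gh (rev q) @ map Ed q)"
      by (rule word_eq_contextI[OF word_eq_V_Ed[of h], of "map Gh (rev q)" "map Ed q'"])
         (use e qE q in auto)
    also have "word_eq \<dots> [V (r (last q))]"
      using Cons.IH False e by simp
    finally show ?thesis using False by simp
  qed
qed

definition walk_to :: "'v \<Rightarrow> 'e list \<Rightarrow> bool" where
  "walk_to v a \<longleftrightarrow> walk a \<and> (a \<noteq> [] \<longrightarrow> r (last a) = v)"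

definition monomial :: "'v \<Rightarrow> 'e list \<Rightarrow> 'e list \<Rightarrow> ('v, 'e) gen list" where
  "monomial v a b = map Ed a @ [V v] @ map Gh (rev b)"

lemma walk_to_edges: "walk_to v a \<Longrightarrow> set a \<subseteq> E1"
  by (simp add: walk_to_def walk_edges)

lemma gen_word_monomial: "v \<in> E0 \<Longrightarrow> walk_to v a \<Longrightarrow> walk_to v b \<Longrightarrow> gen_word (monomial v a b)"
  using walk_to_edges by (auto simp: monomial_def)

lemma word_eq_vertex_ghost_walk:
  assumes "v \<in> E0" "walk_to v b"
  shows "word_eq ([V v] @ map Gh (rev b) @ map Ed b) [V v]"
proof (cases "b = []")
  case True
  then show ?thesis using assms by (simp add: word_eq_refl)
next
  case False
  have "word_eq ([V v] @ (map Gh (rev b) @ map Ed b) @ []) ([V v] @ [V (r (last b))] @ [])"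
    by (rule word_eq_context[OF word_eq_ghost_walk[OF False]])
       (use assms walk_to_edges in \<open>auto simp: walk_to_def\<close>)
  also have "word_eq \<dots> [V v]"
    using word_eq_VV[of v] assms False by (simp add: walk_to_def)
  finally show ?thesis by simp
qed

lemma word_eq_ghost_walk_vertex:
  assumes "u \<in> E0" "walk_to u g"
  shows "word_eq (map Gh (rev g) @ map Ed g @ [V u]) [V u]"
proof (cases "g = []")
  case True
  then show ?thesis using assms by (simp add: word_eq_refl)
next
  case False
  have "word_eq ([] @ (map Gh (rev g) @ map Ed g) @ [V u]) ([] @ [V (r (last g))] @ [V u])"
    by (rule word_eq_context[OF word_eq_ghost_walk[OF False]])
       (use assms walk_to_edges in \<open>auto simp: walk_to_def\<close>)
  also have "word_eq \<dots> [V u]"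
    using word_eq_VV[of u] assms False by (simp add: walk_to_def)
  finally show ?thesis by simp
qed

lemma word_vertex_walk_vertex:
  assumes "v \<in> E0" "u \<in> E0" "walk_to u g"
  shows "word_zero ([V v] @ map Ed g @ [V u]) \<or>
    (if g = [] then v = u else s (hd g) = v) \<and> word_eq ([V v] @ map Ed g @ [V u]) (map Ed g @ [V u])"
proof (cases g)
  case Nil
  then show ?thesis using word_zero_VV[OF assms(1,2)] word_eq_VV[OF assms(1)] by (cases "v = u") auto
next
  case (Cons h g')
  have h: "h \<in> E1" "set g' \<subseteq> E1" using walk_to_edges[OF assms(3)] Cons by auto
  show ?thesis
  proof (cases "s h = v")
    case True
    have "word_eq ([] @ [V (s h), Ed h] @ map Ed g' @ [V u]) ([] @ [Ed h] @ map Ed g' @ [V u])"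
      by (rule word_eq_context[OF word_eq_V_Ed[OF h(1)]]) (use h assms(2) in auto)
    then show ?thesis using True Cons by simp
  next
    case False
    have "word_zero ([] @ [V v, Ed h] @ map Ed g' @ [V u])"
      by (rule word_zero_context[OF word_zero_V_Ed[OF assms(1) h(1) not_sym[OF False]]])
         (use h assms(2) in auto)
    then show ?thesis using Cons by simp
  qed
qed

lemma monomial_mult_prefix:
  assumes "v \<in> E0" "u \<in> E0" "walk_to v a" "walk_to v b" "walk_to u g" "walk_to u d"
    and "g = b @ g'"
  shows "word_zero (monomial v a b @ monomial u g d) \<or>
    walk_to u (a @ g') \<and> word_eq (monomial v a b @ monomial u g d) (monomial u (a @ g') d)"
proof -
  have E: "set a \<subseteq> E1" "set g \<subseteq> E1" "set d \<subseteq> E1"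
    using walk_to_edges[OF assms(3)] walk_to_edges[OF assms(5)] walk_to_edges[OF assms(6)] by auto
  have g': "walk_to u g'" using assms(5,7) by (auto simp: walk_to_def walk_append)
  have w: "word_eq (monomial v a b @ monomial u g d)
      (map Ed a @ ([V v] @ map Ed g' @ [V u]) @ map Gh (rev d))" (is "word_eq ?w _")
    by (rule word_eq_contextI[OF word_eq_vertex_ghost_walk[of v b], of "map Ed a"])
       (use assms E in \<open>auto simp: monomial_def\<close>)
  have ctx: "gen_word (map Ed a)" "gen_word (map Gh (rev d))" using E by auto
  from word_vertex_walk_vertex[OF assms(1,2) g'] show ?thesis
  proof
    assume "word_zero ([V v] @ map Ed g' @ [V u])"
    then show ?thesis using w word_zero_context[OF _ ctx] word_eq_zero by blast
  next
    assume *: "(if g' = [] then v = u else s (hd g') = v) \<and>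
      word_eq ([V v] @ map Ed g' @ [V u]) (map Ed g' @ [V u])"
    then have "walk_to u (a @ g')"
      using assms(3) g' by (auto simp: walk_to_def walk_append split: if_splits)
    moreover have "word_eq ?w (monomial u (a @ g') d)"
      using word_eq_trans[OF w word_eq_context[OF conjunct2[OF *] ctx]]
      by (simp add: monomial_def)
    ultimately show ?thesis by blast
  qed
qed

lemma monomial_mult_strict_prefix:
  assumes "v \<in> E0" "u \<in> E0" "walk_to v a" "walk_to v b" "walk_to u g" "walk_to u d"
    and "b = g @ b'" "b' \<noteq> []"
  shows "word_zero (monomial v a b @ monomial u g d) \<or>
    walk_to v (d @ b') \<and> word_eq (monomial v a b @ monomial u g d) (monomial v a (d @ b'))"
proof -
  obtain h b'' where b': "b' = h # b''" using assms(8) by (cases b') auto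
  have E: "set a \<subseteq> E1" "set b \<subseteq> E1" "set d \<subseteq> E1"
    using walk_to_edges[OF assms(3)] walk_to_edges[OF assms(4)] walk_to_edges[OF assms(6)] by auto
  have h: "h \<in> E1" using E assms(7) b' by auto
  define X where "X = map Ed a @ [V v] @ map Gh (rev b'')"
  have X: "gen_word X" using E assms(1,7) b' by (auto simp: X_def)
  have "word_eq (monomial v a b @ monomial u g d) (X @ [Gh h, V u] @ map Gh (rev d))"
    (is "word_eq ?w ?w'")
    by (rule word_eq_contextI[OF word_eq_ghost_walk_vertex[of u g], of "X @ [Gh h]"])
       (use assms E X h b' in \<open>auto simp: monomial_def X_def\<close>)
  show ?thesis
  proof (cases "s h = u")
    case False
    have "word_zero ?w'"
      by (rule word_zero_context[OF word_zero_Gh_V[OF assms(2) h] X]) (use False E in auto)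
    then show ?thesis using \<open>word_eq ?w ?w'\<close> word_eq_zero by blast
  next
    case True
    have "word_eq ?w' (X @ [Gh h] @ map Gh (rev d))"
      by (rule word_eq_context[OF word_eq_Gh_V[OF h, unfolded True] X]) (use E in auto)
    moreover have "X @ [Gh h] @ map Gh (rev d) = monomial v a (d @ b')"
      by (simp add: X_def monomial_def b')
    moreover have "walk_to v (d @ b')"
      using assms(4,6,7) True b' by (auto simp: walk_to_def walk_append)
    ultimately show ?thesis using \<open>word_eq ?w ?w'\<close> word_eq_trans by metis
  qed
qed

lemma monomial_mult_diverge:
  assumes "v \<in> E0" "u \<in> E0" "walk_to v a" "walk_to v b" "walk_to u g" "walk_to u d"
    and "b = p @ e # b1" "g = p @ h # g1" "e \<noteq> h"
  shows "word_zero (monomial v a b @ monomial u g d)"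
proof -
  have E: "set a \<subseteq> E1" "set b \<subseteq> E1" "set g \<subseteq> E1" "set d \<subseteq> E1"
    using walk_to_edges[OF assms(3)] walk_to_edges[OF assms(4)] walk_to_edges[OF assms(5)]
      walk_to_edges[OF assms(6)] by auto
  have eh: "e \<in> E1" "h \<in> E1" using E assms(7,8) by auto
  define X where "X = map Ed a @ [V v] @ map Gh (rev b1)"
  define Y where "Y = map Ed g1 @ [V u] @ map Gh (rev d)"
  have XY: "gen_word X" "gen_word Y" using E assms by (auto simp: X_def Y_def)
  have "word_zero ([Gh e] @ map Gh (rev p) @ map Ed p @ [Ed h])"
  proof (cases "p = []")
    case True
    then show ?thesis using word_zero_Gh_Ed[OF eh assms(9)] by simp
  next
    case False
    have "walk g" using assms(5) by (simp add: walk_to_def)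
    then have sh: "s h = r (last p)" and p: "walk p"
      using assms(8) False by (auto simp: walk_append walk_Cons)
    have "word_eq ([Gh e] @ (map Gh (rev p) @ map Ed p) @ [Ed h]) ([Gh e] @ [V (r (last p))] @ [Ed h])"
      by (rule word_eq_context[OF word_eq_ghost_walk[OF False p]]) (use eh in auto)
    also have "word_eq \<dots> ([Gh e] @ [Ed h] @ [])"
      by (rule word_eq_contextI[OF word_eq_V_Ed[OF eh(2)], of "[Gh e]" "[]"]) (use eh sh in auto)
    finally show ?thesis using word_zero_Gh_Ed[OF eh assms(9)] word_eq_zero by simp
  qed
  moreover have "monomial v a b @ monomial u g d = X @ ([Gh e] @ map Gh (rev p) @ map Ed p @ [Ed h]) @ Y"
    using assms by (simp add: monomial_def X_def Y_def)
  ultimately show ?thesis using word_zero_context[OF _ XY] by metis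
qed

lemma monomial_mult:
  assumes "v \<in> E0" "u \<in> E0" "walk_to v a" "walk_to v b" "walk_to u g" "walk_to u d"
    and "length a = length b" "length g = length d"
  shows "word_zero (monomial v a b @ monomial u g d) \<or>
    (\<exists>v' a' d'. v' \<in> E0 \<and> walk_to v' a' \<and> walk_to v' d' \<and> length a' = length d' \<and>
        word_eq (monomial v a b @ monomial u g d) (monomial v' a' d'))"
proof (cases b g rule: prefix_cases)
  case 1
  then obtain g' where "g = b @ g'" by (auto simp: prefix_def)
  then show ?thesis
    using monomial_mult_prefix[OF assms(1-6)] assms(2,6,7,8) by fastforce
next
  case 2
  then obtain b' where "b = g @ b'" "b' \<noteq> []" by (auto simp: strict_prefix_def prefix_def)
  then show ?thesis
    using monomial_mult_strict_prefix[OF assms(1-6)] assms(1,3,7,8) by fastforce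
next
  case 3
  then show ?thesis
    using parallel_decomp monomial_mult_diverge[OF assms(1-6)] by metis
qed

section \<open>The degree-zero component is spanned by monomials\<close>

definition monomial_classes :: "(('v, 'e) gen list \<Rightarrow> 'r) set set" where
  "monomial_classes = {cl (wmono R (monomial v a b) c) | v a b c.
     v \<in> E0 \<and> walk_to v a \<and> walk_to v b \<and> length a = length b \<and> c \<in> carrier R}"

lemma monomial_classes_carrier: "monomial_classes \<subseteq> carrier L"
  unfolding monomial_classes_def
  using gen_word_monomial by (auto intro!: cls_carrier wmono_free_alg_carrier)

lemma monomial_classes_mult:
  assumes "x \<in> monomial_classes" "y \<in> monomial_classes"
  shows "x \<otimes>\<^bsub>L\<^esub> y \<in> monomial_classes \<union> {\<zero>\<^bsub>L\<^esub>}"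
proof -
  obtain v a b c where x: "x = cl (wmono R (monomial v a b) c)" "v \<in> E0" "walk_to v a"
    "walk_to v b" "length a = length b" "c \<in> carrier R"
    using assms(1) by (auto simp: monomial_classes_def)
  obtain u g d e where y: "y = cl (wmono R (monomial u g d) e)" "u \<in> E0" "walk_to u g"
    "walk_to u d" "length g = length d" "e \<in> carrier R"
    using assms(2) by (auto simp: monomial_classes_def)
  have xy: "x \<otimes>\<^bsub>L\<^esub> y = cl (wmono R (monomial v a b @ monomial u g d) (c \<otimes> e))"
    using x y by (simp add: cls_wmono_append gen_word_monomial)
  from monomial_mult[OF x(2) y(2) x(3,4) y(3,4) x(5) y(5)] show ?thesis
  proof (elim disjE exE conjE)
    assume "word_zero (monomial v a b @ monomial u g d)"
    then show ?thesis using xy word_zero_cls x(6) y(6) by simp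
  next
    fix v' a' d' assume v': "v' \<in> E0" "walk_to v' a'" "walk_to v' d'" "length a' = length d'"
      and "word_eq (monomial v a b @ monomial u g d) (monomial v' a' d')"
    then have "x \<otimes>\<^bsub>L\<^esub> y = cl (wmono R (monomial v' a' d') (c \<otimes> e))"
      using xy word_eq_cls x(6) y(6) by simp
    then show ?thesis using v' x(6) y(6) unfolding monomial_classes_def by blast
  qed
qed

lemma monomial_classes_uminus:
  assumes "x \<in> monomial_classes"
  shows "\<ominus>\<^bsub>L\<^esub> x \<in> monomial_classes"
proof -
  obtain v a b c where x: "x = cl (wmono R (monomial v a b) c)" "v \<in> E0" "walk_to v a"
    "walk_to v b" "length a = length b" "c \<in> carrier R"
    using assms by (auto simp: monomial_classes_def)
  have w: "gen_word (monomial v a b)" using gen_word_monomial x by simp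
  have "wmono R (monomial v a b) (\<ominus> c) \<oplus>\<^bsub>F\<^esub> wmono R (monomial v a b) c = (\<lambda>w. \<zero>)"
    using x by (auto simp: free_alg_simps wmono_def l_neg)
  then have "cl (wmono R (monomial v a b) (\<ominus> c)) \<oplus>\<^bsub>L\<^esub> x = \<zero>\<^bsub>L\<^esub>"
    using x w by (simp add: cls_add wmono_free_alg_carrier cls_zero)
  then have "\<ominus>\<^bsub>L\<^esub> x = cl (wmono R (monomial v a b) (\<ominus> c))"
    using L.minus_equality x w by (simp add: cls_carrier wmono_free_alg_carrier)
  then show ?thesis
    using x unfolding monomial_classes_def by force
qed

inductive_set monomial_span :: "(('v, 'e) gen list \<Rightarrow> 'r) set set" where
  basis: "x \<in> monomial_classes \<Longrightarrow> x \<in> monomial_span"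
| zero: "\<zero>\<^bsub>L\<^esub> \<in> monomial_span"
| add: "x \<in> monomial_span \<Longrightarrow> y \<in> monomial_span \<Longrightarrow> x \<oplus>\<^bsub>L\<^esub> y \<in> monomial_span"

lemma monomial_span_carrier: "x \<in> monomial_span \<Longrightarrow> x \<in> carrier L"
  by (induction rule: monomial_span.induct) (use monomial_classes_carrier in auto)

lemma monomial_span_uminus: "x \<in> monomial_span \<Longrightarrow> \<ominus>\<^bsub>L\<^esub> x \<in> monomial_span"
proof (induction rule: monomial_span.induct)
  case (add x y)
  then show ?case
    using monomial_span_carrier L.minus_add by (simp add: monomial_span.add)
qed (auto intro: monomial_span.intros monomial_classes_uminus)

lemma monomial_span_mult_basis:
  "y \<in> monomial_span \<Longrightarrow> x \<in> monomial_classes \<Longrightarrow> x \<otimes>\<^bsub>L\<^esub> y \<in> monomial_span"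
proof (induction rule: monomial_span.induct)
  case (basis y)
  then show ?case using monomial_classes_mult[of x y] by (auto intro: monomial_span.intros)
next
  case zero
  then have "x \<in> carrier L" using monomial_classes_carrier by auto
  then show ?case by (simp add: monomial_span.zero)
next
  case (add y z)
  then show ?case
    using monomial_span_carrier monomial_classes_carrier L.r_distr
    by (auto simp: subset_iff intro: monomial_span.add)
qed

lemma monomial_span_mult:
  "x \<in> monomial_span \<Longrightarrow> y \<in> monomial_span \<Longrightarrow> x \<otimes>\<^bsub>L\<^esub> y \<in> monomial_span"
proof (induction rule: monomial_span.induct)
  case (basis x)
  then show ?case using monomial_span_mult_basis by blast
next
  case zero
  then show ?case using monomial_span_carrier by (auto intro: monomial_span.zero)
next
  case (add x z)
  then show ?case
    using monomial_span_carrier L.l_distr by (auto intro: monomial_span.add)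
qed

definition word_sum :: "(nat \<Rightarrow> ('v, 'e) gen list) \<Rightarrow> (nat \<Rightarrow> 'r) \<Rightarrow> nat \<Rightarrow> (('v, 'e) gen list \<Rightarrow> 'r)" where
  "word_sum W c n = (\<lambda>w. finsum R (\<lambda>i. if w = W i then c i else \<zero>) {..<n})"

lemma LPA0_eq_word_sums:
  "LPA0 R E0 E1 s r = {cl (word_sum (\<lambda>i. pword (a i) @ pword_star (b i)) c n) | n c a b.
     \<forall>i<n. c i \<in> carrier R \<and> is_path E0 E1 s r (a i) \<and> is_path E0 E1 s r (b i) \<and> plen (a i) = plen (b i)}"
  unfolding LPA0_def word_sum_def by blast

lemma word_sum_0: "word_sum W c 0 = (\<lambda>w. \<zero>)"
  by (simp add: word_sum_def)

lemma word_sum_Suc: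
  assumes "\<forall>i<Suc n. c i \<in> carrier R"
  shows "word_sum W c (Suc n) = word_sum W c n \<oplus>\<^bsub>F\<^esub> wmono R (W n) (c n)"
  using assms by (auto simp: word_sum_def free_alg_simps wmono_def fun_eq_iff a_comm Pi_def lessThan_Suc
      intro!: finsum_closed)

lemma word_sum_carrier: "\<forall>i<n. gen_word (W i) \<and> c i \<in> carrier R \<Longrightarrow> word_sum W c n \<in> carrier F"
proof (induction n)
  case 0
  then show ?case using F.zero_closed by (simp add: word_sum_0 free_alg_simps(4))
next
  case (Suc n)
  then show ?case using word_sum_Suc[of n c W] wmono_free_alg_carrier by simp
qed

lemma word_sum_one: "c 0 \<in> carrier R \<Longrightarrow> word_sum W c 1 = wmono R (W 0) (c 0)"
  using word_sum_Suc[of 0 c W] by (auto simp: word_sum_0 free_alg_simps wmono_def fun_eq_iff)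

lemma word_sum_append:
  assumes "\<forall>i<n1. c1 i \<in> carrier R" "\<forall>i<n2. c2 i \<in> carrier R"
  shows "word_sum (\<lambda>i. if i < n1 then W1 i else W2 (i - n1))
           (\<lambda>i. if i < n1 then c1 i else if i < n1 + n2 then c2 (i - n1) else \<zero>) (n1 + n2)
       = word_sum W1 c1 n1 \<oplus>\<^bsub>F\<^esub> word_sum W2 c2 n2"
proof -
  have "finsum R (\<lambda>i. if w = (if i < n1 then W1 i else W2 (i - n1))
                 then (if i < n1 then c1 i else if i < n1 + n2 then c2 (i - n1) else \<zero>) else \<zero>) {..<n1 + n2}
      = finsum R (\<lambda>i. if w = W1 i then c1 i else \<zero>) {..<n1}
        \<oplus> finsum R (\<lambda>i. if w = W2 i then c2 i else \<zero>) {..<n2}" for w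
    by (subst finsum_lessThan_add) (use assms in \<open>auto intro!: add.finprod_cong' arg_cong2[where f="(\<oplus>)"]\<close>)
  then show ?thesis by (simp add: word_sum_def free_alg_simps)
qed

lemma gen_word_path_ghost:
  "is_path E0 E1 s r a \<Longrightarrow> is_path E0 E1 s r b \<Longrightarrow> gen_word (pword a @ pword_star b)"
  by (auto simp: is_path_iff_walk pword_def pword_star_def walk_def)

lemma word_eq_Ed_range:
  "a \<noteq> [] \<Longrightarrow> walk a \<Longrightarrow> gen_word Z \<Longrightarrow> word_eq (map Ed a @ Z) (map Ed a @ [V (r (last a))] @ Z)"
proof -
  assume h: "a \<noteq> []" "walk a" "gen_word Z"
  obtain a0 e where a: "a = a0 @ [e]" using h(1) by (cases a rule: rev_cases) auto
  show ?thesis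
    by (rule word_eq_contextI[OF word_eq_sym[OF word_eq_Ed_V[of e]], of "map Ed a0" Z])
       (use a walk_edges[OF h(2)] h in auto)
qed

lemma word_eq_range_Gh:
  "b \<noteq> [] \<Longrightarrow> walk b \<Longrightarrow> gen_word Z \<Longrightarrow> word_eq (Z @ map Gh (rev b)) (Z @ [V (r (last b))] @ map Gh (rev b))"
proof -
  assume h: "b \<noteq> []" "walk b" "gen_word Z"
  obtain b0 e where b: "b = b0 @ [e]" using h(1) by (cases b rule: rev_cases) auto
  show ?thesis
    by (rule word_eq_contextI[OF word_eq_sym[OF word_eq_V_Gh[of e]], of Z "map Gh (rev b0)"])
       (use b walk_edges[OF h(2)] h in auto)
qed

lemma word_eq_walk_ghost_walk:
  assumes "a \<noteq> []" "walk a" "b \<noteq> []" "walk b"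
  shows "word_eq (map Ed a @ map Gh (rev b))
                 (map Ed a @ [V (r (last a))] @ [V (r (last b))] @ map Gh (rev b))"
proof -
  have E: "set a \<subseteq> E1" "set b \<subseteq> E1" using assms walk_edges by auto
  have "r (last a) \<in> E0" using range_in_E0[of "last a"] E assms(1) last_in_set by blast
  then have "word_eq (map Ed a @ [V (r (last a))] @ map Gh (rev b))
      ((map Ed a @ [V (r (last a))]) @ [V (r (last b))] @ map Gh (rev b))"
    using word_eq_range_Gh[of b "map Ed a @ [V (r (last a))]"] assms E by simp
  then show ?thesis
    using word_eq_trans[OF word_eq_Ed_range] assms E by simp
qed

lemma word_eq_monomial:
  assumes "a \<noteq> []" "b \<noteq> []" "v \<in> E0" "walk_to v a" "walk_to v b"
  shows "word_eq (map Ed a @ map Gh (rev b)) (monomial v a b)"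
proof -
  have E: "set a \<subseteq> E1" "set b \<subseteq> E1" using assms walk_to_edges by auto
  have "word_eq (map Ed a @ [V v] @ [V v] @ map Gh (rev b)) (map Ed a @ [V v] @ map Gh (rev b))"
    by (rule word_eq_contextI[OF word_eq_VV[OF assms(3)], of "map Ed a" "map Gh (rev b)"])
       (use E in auto)
  then show ?thesis
    using word_eq_trans[OF word_eq_walk_ghost_walk] assms by (simp add: monomial_def walk_to_def)
qed

lemma word_walk_ghost_walk_cases:
  assumes "a \<noteq> []" "walk a" "b \<noteq> []" "walk b"
  shows "word_zero (map Ed a @ map Gh (rev b)) \<or>
    r (last a) = r (last b) \<and> word_eq (map Ed a @ map Gh (rev b)) (monomial (r (last a)) a b)"
proof -
  have E: "set a \<subseteq> E1" "set b \<subseteq> E1" using assms walk_edges by auto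
  have v: "r (last a) \<in> E0" "r (last b) \<in> E0"
    using range_in_E0 E assms(1,3) last_in_set by blast+
  show ?thesis
  proof (cases "r (last a) = r (last b)")
    case True
    then show ?thesis
      using word_eq_monomial[OF assms(1,3) v(1)] assms(2,4) by (simp add: walk_to_def)
  next
    case False
    have "word_zero (map Ed a @ [V (r (last a)), V (r (last b))] @ map Gh (rev b))"
      by (rule word_zero_context[OF word_zero_VV[OF v False]]) (use E in auto)
    then show ?thesis using word_eq_zero[OF word_eq_walk_ghost_walk[OF assms]] by simp
  qed
qed

lemma word_path_ghost_cases:
  assumes a: "is_path E0 E1 s r a" and b: "is_path E0 E1 s r b" and l: "plen a = plen b"
  shows "word_zero (pword a @ pword_star b) \<or>
    (\<exists>v. v \<in> E0 \<and> walk_to v (snd a) \<and> walk_to v (snd b) \<and>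
         word_eq (pword a @ pword_star b) (monomial v (snd a) (snd b)))"
proof (cases "snd a = []")
  case True
  then have b0: "snd b = []" using l by (simp add: plen_def)
  have w: "pword a @ pword_star b = [V (fst a), V (fst b)]"
    using True b0 by (simp add: pword_def pword_star_def)
  have v: "fst a \<in> E0" "fst b \<in> E0" using a b by (auto simp: is_path_iff_walk)
  show ?thesis
  proof (cases "fst a = fst b")
    case True
    have "word_eq (pword a @ pword_star b) (monomial (fst a) (snd a) (snd b))"
      using word_eq_VV[OF v(1)] w True \<open>snd a = []\<close> b0 by (simp add: monomial_def)
    then show ?thesis
      using v \<open>snd a = []\<close> b0 by (intro disjI2 exI[of _ "fst a"]) (simp add: walk_to_def)
  next
    case False
    then show ?thesis using w word_zero_VV[OF v] by simp
  qed
next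
  case False
  then have b0: "snd b \<noteq> []" using l by (auto simp: plen_def)
  have ch: "walk (snd a)" "walk (snd b)" using a b False b0 by (auto simp: is_path_iff_walk)
  have w: "pword a @ pword_star b = map Ed (snd a) @ map Gh (rev (snd b))"
    using False b0 by (simp add: pword_def pword_star_def)
  have v: "r (last (snd a)) \<in> E0"
    using range_in_E0 walk_edges[OF ch(1)] False last_in_set by blast
  from word_walk_ghost_walk_cases[OF False ch(1) b0 ch(2)] show ?thesis
  proof
    assume "word_zero (map Ed (snd a) @ map Gh (rev (snd b)))"
    then show ?thesis using w by simp
  next
    assume *: "r (last (snd a)) = r (last (snd b)) \<and>
      word_eq (map Ed (snd a) @ map Gh (rev (snd b))) (monomial (r (last (snd a))) (snd a) (snd b))"
    then have "walk_to (r (last (snd a))) (snd a)" "walk_to (r (last (snd a))) (snd b)"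
      using ch by (simp_all add: walk_to_def)
    then show ?thesis using w v conjunct2[OF *] by auto
  qed
qed

lemma cls_path_ghost_monomial_classes:
  assumes "is_path E0 E1 s r a" "is_path E0 E1 s r b" "plen a = plen b" "c \<in> carrier R"
  shows "cl (wmono R (pword a @ pword_star b) c) \<in> monomial_classes \<union> {\<zero>\<^bsub>L\<^esub>}"
  using word_path_ghost_cases[OF assms(1-3)]
proof (elim disjE exE conjE)
  assume "word_zero (pword a @ pword_star b)"
  then show ?thesis using word_zero_cls assms(4) by simp
next
  fix v assume v: "v \<in> E0" "walk_to v (snd a)" "walk_to v (snd b)"
    and "word_eq (pword a @ pword_star b) (monomial v (snd a) (snd b))"
  then have "cl (wmono R (pword a @ pword_star b) c) = cl (wmono R (monomial v (snd a) (snd b)) c)"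
    using word_eq_cls assms(4) by simp
  moreover have "length (snd a) = length (snd b)" using assms(3) by (simp add: plen_def)
  ultimately show ?thesis using v assms(4) unfolding monomial_classes_def by blast
qed

lemma LPA0_subset_monomial_span: "LPA0 R E0 E1 s r \<subseteq> monomial_span"
proof
  fix x assume "x \<in> LPA0 R E0 E1 s r"
  then obtain n c a b where h: "\<forall>i<n. c i \<in> carrier R \<and> is_path E0 E1 s r (a i) \<and>
      is_path E0 E1 s r (b i) \<and> plen (a i) = plen (b i)"
    and x: "x = cl (word_sum (\<lambda>i. pword (a i) @ pword_star (b i)) c n)"
    unfolding LPA0_eq_word_sums by blast
  define W where "W = (\<lambda>i. pword (a i) @ pword_star (b i))"
  have W: "gen_word (W i) \<and> c i \<in> carrier R" if "i < n" for i
    using h that gen_word_path_ghost unfolding W_def by blast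
  have "k \<le> n \<Longrightarrow> cl (word_sum W c k) \<in> monomial_span" for k
  proof (induction k)
    case 0
    then show ?case using monomial_span.zero by (simp add: word_sum_0 cls_zero)
  next
    case (Suc k)
    then have k: "k < n" by simp
    have "cl (wmono R (W k) (c k)) \<in> monomial_span"
      using cls_path_ghost_monomial_classes[of "a k" "b k" "c k"] h k
      by (auto simp: W_def intro: monomial_span.intros)
    moreover have "cl (word_sum W c (Suc k)) = cl (word_sum W c k) \<oplus>\<^bsub>L\<^esub> cl (wmono R (W k) (c k))"
      using word_sum_Suc[of k c W] W k word_sum_carrier[of k W c]
      by (simp add: cls_add wmono_free_alg_carrier)
    ultimately show ?case
      using Suc by (simp add: monomial_span.add)
  qed
  then show "x \<in> monomial_span" using x by (simp add: W_def)
qed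

lemma LPA0_zero: "\<zero>\<^bsub>L\<^esub> \<in> LPA0 R E0 E1 s r"
  unfolding LPA0_eq_word_sums by (force simp: word_sum_0 cls_zero)

lemma monomial_classes_subset_LPA0: "monomial_classes \<subseteq> LPA0 R E0 E1 s r"
proof
  fix x assume "x \<in> monomial_classes"
  then obtain v a b c where x: "x = cl (wmono R (monomial v a b) c)" "v \<in> E0" "walk_to v a"
    "walk_to v b" "length a = length b" "c \<in> carrier R" by (auto simp: monomial_classes_def)
  obtain p q where pq: "is_path E0 E1 s r p" "is_path E0 E1 s r q" "plen p = plen q"
    and eq: "word_eq (pword p @ pword_star q) (monomial v a b)"
  proof (cases "a = []")
    case True
    then have "b = []" using x by simp
    then show ?thesis
      using that[of "(v, [])" "(v, [])"] True x word_eq_VV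
      by (simp add: is_path_iff_walk plen_def pword_def pword_star_def monomial_def)
  next
    case False
    then have b: "b \<noteq> []" using x by auto
    have "walk a" "walk b" using x by (auto simp: walk_to_def)
    then have "s (hd a) \<in> E0" "s (hd b) \<in> E0"
      using walk_edges False b source_in_E0 by (auto simp: hd_in_set subset_iff)
    then show ?thesis
      using that[of "(s (hd a), a)" "(s (hd b), b)"] word_eq_monomial[OF False b x(2-4)]
        \<open>walk a\<close> \<open>walk b\<close> False b x(5)
      by (simp add: is_path_iff_walk plen_def pword_def pword_star_def)
  qed
  have "cl (word_sum (\<lambda>i. pword p @ pword_star q) (\<lambda>_. c) 1) \<in> LPA0 R E0 E1 s r"
    unfolding LPA0_eq_word_sums using pq x(6)
    by (intro CollectI exI[of _ 1] exI[of _ "\<lambda>_. c"] exI[of _ "\<lambda>_. p"] exI[of _ "\<lambda>_. q"]) simp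
  moreover have "cl (word_sum (\<lambda>i. pword p @ pword_star q) (\<lambda>_. c) 1) = x"
    using x(1,6) word_eq_cls[OF eq x(6)] word_sum_one[of "\<lambda>_. c" "\<lambda>i. pword p @ pword_star q"]
    by simp
  ultimately show "x \<in> LPA0 R E0 E1 s r" by simp
qed

lemma LPA0_add:
  assumes "x \<in> LPA0 R E0 E1 s r" "y \<in> LPA0 R E0 E1 s r"
  shows "x \<oplus>\<^bsub>L\<^esub> y \<in> LPA0 R E0 E1 s r"
proof -
  obtain n1 c1 a1 b1 where h1: "\<forall>i<n1. c1 i \<in> carrier R \<and> is_path E0 E1 s r (a1 i) \<and>
      is_path E0 E1 s r (b1 i) \<and> plen (a1 i) = plen (b1 i)"
    and x: "x = cl (word_sum (\<lambda>i. pword (a1 i) @ pword_star (b1 i)) c1 n1)"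
    using assms(1) unfolding LPA0_eq_word_sums by blast
  obtain n2 c2 a2 b2 where h2: "\<forall>i<n2. c2 i \<in> carrier R \<and> is_path E0 E1 s r (a2 i) \<and>
      is_path E0 E1 s r (b2 i) \<and> plen (a2 i) = plen (b2 i)"
    and y: "y = cl (word_sum (\<lambda>i. pword (a2 i) @ pword_star (b2 i)) c2 n2)"
    using assms(2) unfolding LPA0_eq_word_sums by blast
  define a where "a = (\<lambda>i. if i < n1 then a1 i else a2 (i - n1))"
  define b where "b = (\<lambda>i. if i < n1 then b1 i else b2 (i - n1))"
  define c where "c = (\<lambda>i. if i < n1 then c1 i else if i < n1 + n2 then c2 (i - n1) else \<zero>)"
  have h: "\<forall>i<n1 + n2. c i \<in> carrier R \<and> is_path E0 E1 s r (a i) \<and> is_path E0 E1 s r (b i) \<and>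
      plen (a i) = plen (b i)"
    using h1 h2 by (auto simp: a_def b_def c_def)
  have "(\<lambda>i. pword (a i) @ pword_star (b i)) = (\<lambda>i. if i < n1 then pword (a1 i) @ pword_star (b1 i)
      else pword (a2 (i - n1)) @ pword_star (b2 (i - n1)))"
    by (auto simp: a_def b_def)
  then have "word_sum (\<lambda>i. pword (a i) @ pword_star (b i)) c (n1 + n2) =
      word_sum (\<lambda>i. pword (a1 i) @ pword_star (b1 i)) c1 n1 \<oplus>\<^bsub>F\<^esub>
      word_sum (\<lambda>i. pword (a2 i) @ pword_star (b2 i)) c2 n2"
    using word_sum_append[of n1 c1 n2 c2] h1 h2 by (simp add: c_def)
  moreover have "word_sum (\<lambda>i. pword (a1 i) @ pword_star (b1 i)) c1 n1 \<in> carrier F"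
    "word_sum (\<lambda>i. pword (a2 i) @ pword_star (b2 i)) c2 n2 \<in> carrier F"
    using h1 h2 gen_word_path_ghost by (blast intro: word_sum_carrier)+
  ultimately have "x \<oplus>\<^bsub>L\<^esub> y = cl (word_sum (\<lambda>i. pword (a i) @ pword_star (b i)) c (n1 + n2))"
    using x y by (simp add: cls_add)
  then show ?thesis using h unfolding LPA0_eq_word_sums by blast
qed

lemma LPA0_eq_monomial_span: "LPA0 R E0 E1 s r = monomial_span"
proof
  show "monomial_span \<subseteq> LPA0 R E0 E1 s r"
  proof
    show "x \<in> LPA0 R E0 E1 s r" if "x \<in> monomial_span" for x
      using that
      by (induction rule: monomial_span.induct)
         (use monomial_classes_subset_LPA0 LPA0_zero LPA0_add in auto)
  qed
qed (rule LPA0_subset_monomial_span)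

lemma additive_subgroup_LPA0: "additive_subgroup (LPA0 R E0 E1 s r) L"
proof (rule additive_subgroupI)
  show "subgroup (LPA0 R E0 E1 s r) (add_monoid L)"
  proof
    show "LPA0 R E0 E1 s r \<subseteq> carrier (add_monoid L)"
      using monomial_span_carrier by (auto simp: LPA0_eq_monomial_span)
    show "\<one>\<^bsub>add_monoid L\<^esub> \<in> LPA0 R E0 E1 s r"
      using LPA0_zero by simp
    show "x \<otimes>\<^bsub>add_monoid L\<^esub> y \<in> LPA0 R E0 E1 s r"
      if "x \<in> LPA0 R E0 E1 s r" "y \<in> LPA0 R E0 E1 s r" for x y
      using LPA0_add that by simp
    show "inv\<^bsub>add_monoid L\<^esub> x \<in> LPA0 R E0 E1 s r" if "x \<in> LPA0 R E0 E1 s r" for x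
      using monomial_span_uminus that unfolding a_inv_def[symmetric] LPA0_eq_monomial_span .
  qed
qed

lemma LPA0_mult:
  "x \<in> LPA0 R E0 E1 s r \<Longrightarrow> y \<in> LPA0 R E0 E1 s r \<Longrightarrow> x \<otimes>\<^bsub>L\<^esub> y \<in> LPA0 R E0 E1 s r"
  using monomial_span_mult by (simp add: LPA0_eq_monomial_span)

section \<open>Runs and an action of the free algebra\<close>

definition regular :: "'v \<Rightarrow> bool" where
  "regular v \<longleftrightarrow> {e \<in> E1. s e = v} \<noteq> {} \<and> finite {e \<in> E1. s e = v}"

text \<open>A run records, at each step, the current vertex and the edge taken next; it may stop
  (edge None, vertex repeated forever) only at a vertex that is not regular. The free algebra acts
  on R-valued functions on runs: V v restricts to runs starting at v, Ed e removes the first step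
  of runs starting with e, and Gh e prepends e. All Leavitt relations act as zero, which makes this
  action a tool for showing that elements are not in the Leavitt ideal.\<close>

definition is_run :: "(nat \<Rightarrow> 'v \<times> 'e option) \<Rightarrow> bool" where
  "is_run x \<longleftrightarrow> (\<forall>n. case snd (x n) of
      Some e \<Rightarrow> e \<in> E1 \<and> s e = fst (x n) \<and> fst (x (Suc n)) = r e
    | None \<Rightarrow> \<not> regular (fst (x n)) \<and> x (Suc n) = x n)"

definition cons_edge :: "'e \<Rightarrow> (nat \<Rightarrow> 'v \<times> 'e option) \<Rightarrow> nat \<Rightarrow> 'v \<times> 'e option" where
  "cons_edge e y = (\<lambda>n. case n of 0 \<Rightarrow> (s e, Some e) | Suc m \<Rightarrow> y m)"

fun gen_op :: "('v, 'e) gen \<Rightarrow> ((nat \<Rightarrow> 'v \<times> 'e option) \<Rightarrow> 'r) \<Rightarrow> (nat \<Rightarrow> 'v \<times> 'e option) \<Rightarrow> 'r" where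
  "gen_op (V v) \<psi> x = (if is_run x \<and> fst (x 0) = v then \<psi> x else \<zero>)"
| "gen_op (Ed e) \<psi> x = (if is_run x \<and> snd (x 0) = Some e then \<psi> (\<lambda>n. x (Suc n)) else \<zero>)"
| "gen_op (Gh e) \<psi> x = (if is_run x \<and> fst (x 0) = r e \<and> e \<in> E1 then \<psi> (cons_edge e x) else \<zero>)"

definition word_op :: "('v, 'e) gen list \<Rightarrow> ((nat \<Rightarrow> 'v \<times> 'e option) \<Rightarrow> 'r) \<Rightarrow> (nat \<Rightarrow> 'v \<times> 'e option) \<Rightarrow> 'r" where
  "word_op w = foldr gen_op w"

definition act :: "(('v, 'e) gen list \<Rightarrow> 'r) \<Rightarrow> ((nat \<Rightarrow> 'v \<times> 'e option) \<Rightarrow> 'r) \<Rightarrow> (nat \<Rightarrow> 'v \<times> 'e option) \<Rightarrow> 'r" where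
  "act a \<phi> x = lin_ext (\<lambda>w. word_op w \<phi> x) a"

definition act_kernel :: "(('v, 'e) gen list \<Rightarrow> 'r) set" where
  "act_kernel = {a \<in> carrier F. \<forall>\<phi>. (\<forall>x. \<phi> x \<in> carrier R) \<longrightarrow> (\<forall>x. act a \<phi> x = \<zero>)}"

lemma word_op_simps [simp]: "word_op [] \<psi> = \<psi>" "word_op (g # w) \<psi> = gen_op g (word_op w \<psi>)"
  by (simp_all add: word_op_def)

lemma word_op_append: "word_op (u @ v) \<psi> = word_op u (word_op v \<psi>)"
  by (simp add: word_op_def)

lemma word_op_shift: "\<exists>P y. \<forall>\<psi>. word_op w \<psi> x = (if P then \<psi> y else \<zero>)"
proof (induction w arbitrary: x)
  case Nil
  then show ?case by (rule exI[of _ True]) auto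
next
  case (Cons g w)
  obtain P y where P: "\<forall>\<psi>. gen_op g \<psi> x = (if P then \<psi> y else \<zero>)"
    by (cases g) auto
  obtain P' y' where P': "\<forall>\<psi>. word_op w \<psi> y = (if P' then \<psi> y' else \<zero>)"
    using Cons by blast
  show ?case by (rule exI[of _ "P \<and> P'"], rule exI[of _ y']) (simp add: P P')
qed

lemma word_op_closed: "(\<And>x. \<phi> x \<in> carrier R) \<Longrightarrow> word_op w \<phi> x \<in> carrier R"
  using word_op_shift[of w x] by (metis zero_closed)

lemma word_op_zero: "word_op w (\<lambda>_. \<zero>) x = \<zero>"
  using word_op_shift[of w x] by auto

lemma act_closed: "fin_supp a \<Longrightarrow> (\<And>x. \<phi> x \<in> carrier R) \<Longrightarrow> act a \<phi> x \<in> carrier R"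
  unfolding act_def by (rule lin_ext_closed) (auto intro: word_op_closed)

lemma act_conv:
  assumes a: "fin_supp a" and b: "fin_supp b" and \<phi>: "\<And>x. \<phi> x \<in> carrier R"
  shows "act (conv a b) \<phi> x = act a (act b \<phi>) x"
proof -
  have linear: "lin_ext (\<lambda>v. word_op u (word_op v \<phi>) x) b = word_op u (act b \<phi>) x" for u
  proof -
    obtain P y where "\<forall>\<psi>. word_op u \<psi> x = (if P then \<psi> y else \<zero>)"
      using word_op_shift by blast
    then show ?thesis using lin_ext_zero[OF b] by (simp add: act_def)
  qed
  have "act (conv a b) \<phi> x = lin_ext (\<lambda>u. lin_ext (\<lambda>v. word_op (u @ v) \<phi> x) b) a"
    unfolding act_def by (rule lin_ext_conv[OF a b]) (rule word_op_closed[OF \<phi>])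
  also have "\<dots> = lin_ext (\<lambda>u. word_op u (act b \<phi>) x) a"
    by (rule lin_ext_cong[OF a])
       (use linear act_closed[OF b \<phi>] in \<open>auto simp: word_op_append intro: word_op_closed\<close>)
  finally show ?thesis by (simp add: act_def)
qed

lemma act_add:
  "fin_supp a \<Longrightarrow> fin_supp b \<Longrightarrow> (\<And>x. \<phi> x \<in> carrier R)
    \<Longrightarrow> act (\<lambda>w. a w \<oplus> b w) \<phi> x = act a \<phi> x \<oplus> act b \<phi> x"
  unfolding act_def by (rule lin_ext_add) (auto intro: word_op_closed)

lemma act_zero: "act (\<lambda>w. \<zero>) \<phi> x = \<zero>"
  by (simp add: act_def lin_ext_def supp_def)

lemma act_uminus:
  assumes a: "fin_supp a" and \<phi>: "\<And>x. \<phi> x \<in> carrier R"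
  shows "act (\<lambda>w. \<ominus> a w) \<phi> x = \<ominus> act a \<phi> x"
proof -
  have na: "fin_supp (\<lambda>w. \<ominus> a w)" using a by (simp add: fin_supp_def supp_def)
  have "act (\<lambda>w. \<ominus> a w) \<phi> x \<oplus> act a \<phi> x = act (\<lambda>w. \<ominus> a w \<oplus> a w) \<phi> x"
    using act_add[OF na a \<phi>] by simp
  also have "(\<lambda>w. \<ominus> a w \<oplus> a w) = (\<lambda>w. \<zero>)"
    using a by (simp add: fin_supp_def l_neg)
  finally show ?thesis
    using act_zero act_closed[OF na \<phi>] act_closed[OF a \<phi>] minus_equality by simp
qed

lemma subgroup_act_kernel: "subgroup act_kernel (add_monoid F)"
proof
  show "act_kernel \<subseteq> carrier (add_monoid F)" by (auto simp: act_kernel_def)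
  show "\<one>\<^bsub>add_monoid F\<^esub> \<in> act_kernel"
    using F.zero_closed by (simp add: act_kernel_def free_alg_simps act_zero)
  fix a b assume ab: "a \<in> act_kernel" "b \<in> act_kernel"
  then have abc: "a \<in> carrier F" "b \<in> carrier F" by (auto simp: act_kernel_def)
  have "act (\<lambda>w. a w \<oplus> b w) \<phi> x = \<zero>" if "\<forall>x. \<phi> x \<in> carrier R" for \<phi> x
    using ab that act_add[of a b \<phi> x] free_alg_carrier_fin_supp[OF abc(1)]
      free_alg_carrier_fin_supp[OF abc(2)] by (simp add: act_kernel_def)
  then show "a \<otimes>\<^bsub>add_monoid F\<^esub> b \<in> act_kernel"
    using F.add.m_closed[OF abc] by (simp add: act_kernel_def free_alg_simps(5))
next
  fix a assume a: "a \<in> act_kernel"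
  then have ac: "a \<in> carrier F" by (simp add: act_kernel_def)
  have "act (\<lambda>w. \<ominus> a w) \<phi> x = \<zero>" if "\<forall>x. \<phi> x \<in> carrier R" for \<phi> x
    using a that act_uminus[OF free_alg_carrier_fin_supp[OF ac], of \<phi> x]
    by (simp add: act_kernel_def)
  then have "\<ominus>\<^bsub>F\<^esub> a \<in> act_kernel"
    using F.add.inv_closed[OF ac] by (simp add: act_kernel_def uminus_free_alg[OF ac])
  then show "inv\<^bsub>add_monoid F\<^esub> a \<in> act_kernel"
    unfolding a_inv_def .
qed

lemma ideal_act_kernel: "ideal act_kernel F"
proof (rule idealI[OF F.ring_axioms subgroup_act_kernel])
  fix a x assume a: "a \<in> act_kernel" and x: "x \<in> carrier F"
  have ac: "a \<in> carrier F" using a by (simp add: act_kernel_def)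
  have fin: "fin_supp x" "fin_supp a"
    using free_alg_carrier_fin_supp x ac by auto
  have "act (conv x a) \<phi> y = \<zero>" if \<phi>: "\<forall>x. \<phi> x \<in> carrier R" for \<phi> y
  proof -
    have "act a \<phi> = (\<lambda>_. \<zero>)" using a \<phi> by (auto simp: act_kernel_def)
    then show ?thesis
      using act_conv[of x a \<phi> y] fin \<phi> lin_ext_zero[OF fin(1)] by (simp add: act_def word_op_zero)
  qed
  then show "x \<otimes>\<^bsub>F\<^esub> a \<in> act_kernel"
    using conv_free_alg_closed[OF x ac] by (simp add: act_kernel_def free_alg_simps(2))
  have "act (conv a x) \<phi> y = \<zero>" if \<phi>: "\<forall>x. \<phi> x \<in> carrier R" for \<phi> y
    using act_conv[of a x \<phi> y] fin \<phi> a act_closed[of x \<phi>] by (simp add: act_kernel_def)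
  then show "a \<otimes>\<^bsub>F\<^esub> x \<in> act_kernel"
    using conv_free_alg_closed[OF ac x] by (simp add: act_kernel_def free_alg_simps(2))
qed

lemma is_run_Suc: "is_run x \<Longrightarrow> is_run (\<lambda>n. x (Suc n))"
  unfolding is_run_def by auto

lemma is_run_Some:
  assumes "is_run x" "snd (x 0) = Some e"
  shows "e \<in> E1 \<and> s e = fst (x 0) \<and> fst (x (Suc 0)) = r e"
  using assms(1)[unfolded is_run_def, rule_format, of 0] assms(2) by simp

lemma is_run_None:
  assumes "is_run x" "snd (x 0) = None"
  shows "\<not> regular (fst (x 0))"
  using assms(1)[unfolded is_run_def, rule_format, of 0] assms(2) by simp

lemma cons_edge_simps [simp]:
  "cons_edge e y 0 = (s e, Some e)" "cons_edge e y (Suc n) = y n" "(\<lambda>n. cons_edge e y (Suc n)) = y"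
  by (simp_all add: cons_edge_def)

lemma cons_edge_tl: "snd (x 0) = Some e \<Longrightarrow> s e = fst (x 0) \<Longrightarrow> cons_edge e (\<lambda>n. x (Suc n)) = x"
  by (auto simp: cons_edge_def fun_eq_iff prod_eq_iff split: nat.splits)

lemma is_run_cons_edge:
  assumes "is_run y" "e \<in> E1" "fst (y 0) = r e"
  shows "is_run (cons_edge e y)"
  unfolding is_run_def
proof
  fix n
  show "case snd (cons_edge e y n) of
      None \<Rightarrow> \<not> regular (fst (cons_edge e y n)) \<and> cons_edge e y (Suc n) = cons_edge e y n
    | Some f \<Rightarrow> f \<in> E1 \<and> s f = fst (cons_edge e y n) \<and> fst (cons_edge e y (Suc n)) = r f"
  proof (cases n)
    case 0
    then show ?thesis using assms by simp
  next
    case (Suc m)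
    show ?thesis
      using assms(1)[unfolded is_run_def, rule_format, of m] unfolding Suc cons_edge_simps .
  qed
qed

lemma act_wmono:
  assumes c: "c \<in> carrier R" and \<phi>: "\<And>x. \<phi> x \<in> carrier R"
  shows "act (wmono R w c) \<phi> x = c \<otimes> word_op w \<phi> x"
proof -
  have "act (wmono R w c) \<phi> x = finsum R (\<lambda>u. wmono R w c u \<otimes> word_op u \<phi> x) {w}"
    unfolding act_def
    by (rule lin_ext_superset) (use c word_op_closed[of \<phi>, OF \<phi>] in \<open>auto simp: supp_def wmono_def\<close>)
  then show ?thesis using c word_op_closed[of \<phi>, OF \<phi>] by (simp add: wmono_def)
qed

lemma act_rel2:
  assumes "w1 \<noteq> w2" "\<And>x. \<phi> x \<in> carrier R"
  shows "act (rel2 R w1 w2) \<phi> x = word_op w1 \<phi> x \<ominus> word_op w2 \<phi> x"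
proof -
  have Tc: "\<And>w. word_op w \<phi> x \<in> carrier R" using word_op_closed assms(2) by blast
  have "act (rel2 R w1 w2) \<phi> x = finsum R (\<lambda>u. rel2 R w1 w2 u \<otimes> word_op u \<phi> x) {w1, w2}"
    unfolding act_def by (rule lin_ext_superset) (use Tc in \<open>auto simp: supp_def rel2_def\<close>)
  then show ?thesis using assms(1) Tc by (simp add: finsum_insert rel2_def l_minus a_minus_def)
qed

lemma word_op_Ed_Gh:
  "word_op [Ed f, Gh f] \<phi> x = (if is_run x \<and> snd (x 0) = Some f then \<phi> x else \<zero>)"
proof (cases "is_run x \<and> snd (x 0) = Some f")
  case True
  then show ?thesis using is_run_Some[of x f] cons_edge_tl[of x f] is_run_Suc[of x] by simp
qed auto

text \<open>Every run starting at a regular vertex v begins with exactly one of the edges out of v.\<close>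

lemma sum_word_op_Ed_Gh:
  assumes v: "regular v" and \<phi>: "\<And>x. \<phi> x \<in> carrier R"
  shows "finsum R (\<lambda>f. word_op [Ed f, Gh f] \<phi> x) {f \<in> E1. s f = v} = word_op [V v] \<phi> x"
proof (cases "is_run x \<and> fst (x 0) = v")
  case True
  obtain f0 where f0: "snd (x 0) = Some f0"
    using is_run_None[of x] True v by (cases "snd (x 0)") auto
  have f0E: "f0 \<in> E1" "s f0 = v" using is_run_Some[of x f0] f0 True by auto
  have fin: "finite {f \<in> E1. s f = v}" using v by (simp add: regular_def)
  have "finsum R (\<lambda>f. word_op [Ed f, Gh f] \<phi> x) {f \<in> E1. s f = v}
      = finsum R (\<lambda>f. if f = f0 then \<phi> x else \<zero>) {f \<in> E1. s f = v}"
    by (rule add.finprod_cong') (use f0 True \<phi> in \<open>auto simp del: word_op_simps simp: word_op_Ed_Gh\<close>)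
  also have "\<dots> = \<phi> x"
    by (rule add.finprod_singleton_swap[where f="\<lambda>_. \<phi> x", simplified]) (use f0E fin \<phi> in auto)
  finally show ?thesis using True by simp
next
  case False
  have "finsum R (\<lambda>f. word_op [Ed f, Gh f] \<phi> x) {f \<in> E1. s f = v} = \<zero>"
  proof (rule add.finprod_one_eqI)
    fix f assume f: "f \<in> {f \<in> E1. s f = v}"
    show "word_op [Ed f, Gh f] \<phi> x = \<zero>"
      using False is_run_Some[of x f] f by (auto simp del: word_op_simps simp: word_op_Ed_Gh)
  qed
  then show ?thesis using False by auto
qed

lemma act_ck_rel:
  assumes v: "regular v" and \<phi>: "\<And>x. \<phi> x \<in> carrier R"
  shows "act (ck_rel R E1 s v) \<phi> x = \<zero>"
proof -
  define Ev where "Ev = {f \<in> E1. s f = v}"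
  have fin: "finite Ev" using v by (simp add: regular_def Ev_def)
  have Tc: "\<And>w. word_op w \<phi> x \<in> carrier R" using word_op_closed \<phi> by blast
  have ckc: "ck_rel R E1 s v u \<in> carrier R" for u by (simp add: ck_rel_def)
  have nin: "[V v] \<notin> (\<lambda>f. [Ed f, Gh f]) ` Ev" by auto
  have "act (ck_rel R E1 s v) \<phi> x
      = finsum R (\<lambda>u. ck_rel R E1 s v u \<otimes> word_op u \<phi> x) (insert [V v] ((\<lambda>f. [Ed f, Gh f]) ` Ev))"
    unfolding act_def
    by (rule lin_ext_superset) (use fin Tc ckc in \<open>auto simp: supp_def ck_rel_def Ev_def split: if_splits\<close>)
  also have "\<dots> = ck_rel R E1 s v [V v] \<otimes> word_op [V v] \<phi> x \<oplus>
      finsum R (\<lambda>u. ck_rel R E1 s v u \<otimes> word_op u \<phi> x) ((\<lambda>f. [Ed f, Gh f]) ` Ev)"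
    by (rule finsum_insert) (use fin nin Tc ckc \<phi> in auto)
  also have "finsum R (\<lambda>u. ck_rel R E1 s v u \<otimes> word_op u \<phi> x) ((\<lambda>f. [Ed f, Gh f]) ` Ev)
      = finsum R (\<lambda>f. ck_rel R E1 s v [Ed f, Gh f] \<otimes> word_op [Ed f, Gh f] \<phi> x) Ev"
    by (rule finsum_reindex) (use Tc ckc in \<open>auto simp: inj_on_def\<close>)
  also have "\<dots> = finsum R (\<lambda>f. word_op [Ed f, Gh f] \<phi> x) Ev"
    by (rule add.finprod_cong') (use Tc in \<open>auto simp del: word_op_simps simp: ck_rel_def Ev_def\<close>)
  also have "\<dots> = word_op [V v] \<phi> x"
    unfolding Ev_def by (rule sum_word_op_Ed_Gh[OF v \<phi>])
  finally show ?thesis using Tc by (simp add: ck_rel_def l_minus l_neg del: word_op_simps)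
qed

lemma word_op_leavitt_rels:
  "v \<noteq> u \<Longrightarrow> word_op [V v, V u] \<phi> x = \<zero>"
  "word_op [V v, V v] \<phi> x = word_op [V v] \<phi> x"
  "word_op [V (s f), Ed f] \<phi> x = word_op [Ed f] \<phi> x"
  "word_op [Ed f, V (r f)] \<phi> x = word_op [Ed f] \<phi> x"
  "word_op [V (r f), Gh f] \<phi> x = word_op [Gh f] \<phi> x"
  "word_op [Gh f, V (s f)] \<phi> x = word_op [Gh f] \<phi> x"
  "f \<in> E1 \<Longrightarrow> word_op [Gh f, Ed f] \<phi> x = word_op [V (r f)] \<phi> x"
  "f \<noteq> g \<Longrightarrow> word_op [Gh f, Ed g] \<phi> x = \<zero>"
  using is_run_Some[of x f] is_run_Suc[of x] is_run_cons_edge[of x f] by auto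

lemma leavitt_rels_subset_act_kernel: "leavitt_rels R E0 E1 s r \<subseteq> act_kernel"
proof
  fix y assume y: "y \<in> leavitt_rels R E0 E1 s r"
  have "act y \<phi> x = \<zero>" if \<phi>: "\<And>x. \<phi> x \<in> carrier R" for \<phi> x
  proof -
    have Tc: "\<And>w. word_op w \<phi> x \<in> carrier R" using word_op_closed \<phi> by blast
    have rel2: "act (rel2 R w1 w2) \<phi> x = \<zero>" if "w1 \<noteq> w2" "word_op w1 \<phi> x = word_op w2 \<phi> x" for w1 w2
      using act_rel2[of w1 w2 \<phi> x, OF that(1) \<phi>] that Tc by (simp add: a_minus_def r_neg)
    have mono: "act (wmono R w \<one>) \<phi> x = \<zero>" if "word_op w \<phi> x = \<zero>" for w
      using act_wmono[of \<one> \<phi> w x, OF one_closed \<phi>] that by simp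
    from y show ?thesis unfolding leavitt_rels_def
    proof (elim UnE CollectE exE conjE)
      fix v assume "y = ck_rel R E1 s v" "{f \<in> E1. s f = v} \<noteq> {}" "finite {f \<in> E1. s f = v}"
      then show ?thesis using act_ck_rel[OF _ \<phi>] by (simp add: regular_def)
    qed (simp_all add: rel2 mono word_op_leavitt_rels del: word_op_simps)
  qed
  then show "y \<in> act_kernel"
    using y leavitt_rels_carrier by (auto simp: act_kernel_def)
qed

lemma leavitt_ideal_subset_act_kernel: "I \<subseteq> act_kernel"
  unfolding leavitt_ideal_def
  by (rule F.genideal_minimal[OF ideal_act_kernel leavitt_rels_subset_act_kernel])

definition next_edge :: "'v \<Rightarrow> 'e option" where
  "next_edge v = (if regular v then Some (SOME e. e \<in> E1 \<and> s e = v) else None)"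

definition next_vertex :: "'v \<Rightarrow> 'v" where
  "next_vertex v = (case next_edge v of Some e \<Rightarrow> r e | None \<Rightarrow> v)"

definition default_run :: "'v \<Rightarrow> nat \<Rightarrow> 'v \<times> 'e option" where
  "default_run v = (\<lambda>n. ((next_vertex ^^ n) v, next_edge ((next_vertex ^^ n) v)))"

lemma is_run_default_run: "is_run (default_run v)"
  unfolding is_run_def
proof
  fix n
  define u where "u = (next_vertex ^^ n) v"
  have u: "default_run v n = (u, next_edge u)"
    "default_run v (Suc n) = (next_vertex u, next_edge (next_vertex u))"
    by (simp_all add: default_run_def u_def)
  show "case snd (default_run v n) of
      None \<Rightarrow> \<not> regular (fst (default_run v n)) \<and> default_run v (Suc n) = default_run v n
    | Some e \<Rightarrow> e \<in> E1 \<and> s e = fst (default_run v n) \<and> fst (default_run v (Suc n)) = r e"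
  proof (cases "regular u")
    case True
    then have "\<exists>e. e \<in> E1 \<and> s e = u" by (auto simp: regular_def)
    then have "(SOME e. e \<in> E1 \<and> s e = u) \<in> E1 \<and> s (SOME e. e \<in> E1 \<and> s e = u) = u"
      by (rule someI_ex)
    then show ?thesis using True u by (simp add: next_edge_def next_vertex_def)
  next
    case False
    then show ?thesis using u by (simp add: next_edge_def next_vertex_def)
  qed
qed

lemma default_run_0: "fst (default_run v 0) = v"
  by (simp add: default_run_def)

definition prepend_walk :: "'e list \<Rightarrow> (nat \<Rightarrow> 'v \<times> 'e option) \<Rightarrow> nat \<Rightarrow> 'v \<times> 'e option" where
  "prepend_walk q y = foldr cons_edge q y"

lemma is_run_prepend_walk:
  "walk q \<Longrightarrow> is_run y \<Longrightarrow> (q \<noteq> [] \<longrightarrow> fst (y 0) = r (last q)) \<Longrightarrow>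
   is_run (prepend_walk q y) \<and> (q \<noteq> [] \<longrightarrow> fst (prepend_walk q y 0) = s (hd q))"
proof (induction q)
  case Nil
  then show ?case by (simp add: prepend_walk_def)
next
  case (Cons e q)
  have h: "e \<in> E1" "walk q" "q \<noteq> [] \<Longrightarrow> s (hd q) = r e" using Cons.prems by (auto simp: walk_Cons)
  have IH: "is_run (prepend_walk q y) \<and> (q \<noteq> [] \<longrightarrow> fst (prepend_walk q y 0) = s (hd q))"
    using Cons.IH h Cons.prems by auto
  have "fst (prepend_walk q y 0) = r e"
    using IH h Cons.prems by (cases "q = []") (auto simp: prepend_walk_def)
  then have "is_run (cons_edge e (prepend_walk q y))" using is_run_cons_edge IH h by blast
  then show ?case by (simp add: prepend_walk_def)
qed

lemma word_op_Ed_prepend_walk: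
  "is_run (prepend_walk q y) \<Longrightarrow> word_op (map Ed q @ w) \<phi> (prepend_walk q y) = word_op w \<phi> y"
proof (induction q)
  case Nil
  then show ?case by (simp add: prepend_walk_def)
next
  case (Cons e q)
  have run: "is_run (cons_edge e (prepend_walk q y))" using Cons.prems by (simp add: prepend_walk_def)
  then have "is_run (prepend_walk q y)" using is_run_Suc[of "cons_edge e (prepend_walk q y)"] by simp
  then show ?case using Cons.IH run by (simp add: prepend_walk_def)
qed

lemma word_op_Gh_walk:
  "walk q \<Longrightarrow> q \<noteq> [] \<Longrightarrow> is_run y \<Longrightarrow> fst (y 0) = r (last q) \<Longrightarrow>
    word_op (map Gh (rev q)) \<phi> y = \<phi> (prepend_walk q y)"
proof (induction q arbitrary: y rule: rev_induct)
  case Nil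
  then show ?case by simp
next
  case (snoc e q)
  have h: "walk q" "e \<in> E1" "q \<noteq> [] \<Longrightarrow> s e = r (last q)"
    using snoc.prems by (auto simp: walk_append walk_Cons)
  have fy: "fst (y 0) = r e" using snoc.prems by simp
  have T1: "word_op (map Gh (rev (q @ [e]))) \<phi> y = word_op (map Gh (rev q)) \<phi> (cons_edge e y)"
    using snoc.prems h fy by simp
  show ?case
  proof (cases "q = []")
    case True
    then show ?thesis using T1 by (simp add: prepend_walk_def)
  next
    case False
    have "word_op (map Gh (rev q)) \<phi> (cons_edge e y) = \<phi> (prepend_walk q (cons_edge e y))"
      by (rule snoc.IH) (use h False is_run_cons_edge[of y e] snoc.prems fy in auto)
    then show ?thesis using T1 by (simp add: prepend_walk_def)
  qed
qed

text \<open>The idempotent of a walk q acts as the identity on the indicator function of a run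
  beginning with q, so it is not killed by the action.\<close>

lemma wmono_walk_ghost_notin_leavitt_ideal:
  assumes "\<one> \<noteq> \<zero>" "q \<noteq> []" "walk q"
  shows "wmono R (map Ed q @ map Gh (rev q)) \<one> \<notin> I"
proof
  assume "wmono R (map Ed q @ map Gh (rev q)) \<one> \<in> I"
  then have K: "wmono R (map Ed q @ map Gh (rev q)) \<one> \<in> act_kernel"
    using leavitt_ideal_subset_act_kernel by auto
  define y where "y = default_run (r (last q))"
  have y: "is_run y" "fst (y 0) = r (last q)"
    using is_run_default_run default_run_0 by (auto simp: y_def)
  have run: "is_run (prepend_walk q y)" using is_run_prepend_walk[OF assms(3) y(1)] y by auto
  define \<phi> where "\<phi> = (\<lambda>z. if z = prepend_walk q y then \<one> else \<zero>)"
  have \<phi>: "\<forall>x. \<phi> x \<in> carrier R" by (simp add: \<phi>_def)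
  have "act (wmono R (map Ed q @ map Gh (rev q)) \<one>) \<phi> (prepend_walk q y)
      = \<one> \<otimes> word_op (map Ed q @ map Gh (rev q)) \<phi> (prepend_walk q y)"
    by (rule act_wmono) (use \<phi> in auto)
  also have "\<dots> = \<one>"
    using word_op_Ed_prepend_walk[OF run] word_op_Gh_walk[OF assms(3,2) y] by (simp add: \<phi>_def)
  finally show False using K \<phi> assms(1) by (auto simp: act_kernel_def)
qed

end

section \<open>Orthogonal idempotents in a subring prevent chain conditions\<close>

lemma chain_not_stable:
  assumes "\<And>n. J n \<subseteq> J (Suc n)" "\<And>n. x n \<in> J (Suc n)" "\<And>n. x n \<notin> J n"
  shows "\<not> (\<exists>N. \<forall>n\<ge>N. J n = J N)"
  using assms by (metis le_SucI order_refl)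

context ring
begin

context
  fixes S :: "'a set" and e :: "nat \<Rightarrow> 'a"
  assumes S: "additive_subgroup S R" "\<And>x y. x \<in> S \<Longrightarrow> y \<in> S \<Longrightarrow> x \<otimes> y \<in> S"
    and e: "\<And>n. e n \<in> S" "\<And>n. e n \<otimes> e n = e n" "\<And>n. e n \<noteq> \<zero>"
      "\<And>m n. m \<noteq> n \<Longrightarrow> e m \<otimes> e n = \<zero>"
begin

private lemma S_carrier: "x \<in> S \<Longrightarrow> x \<in> carrier R"
  using additive_subgroup.a_subset[OF S(1)] by auto

private lemma e_carrier: "e n \<in> carrier R"
  using e(1) S_carrier by blast

private definition E :: "nat \<Rightarrow> 'a" where
  "E k = finsum R e {..<k}"

private lemma E_carrier: "E k \<in> carrier R"
  unfolding E_def using e_carrier by (auto intro: finsum_closed)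

private lemma E_Suc: "E (Suc k) = e k \<oplus> E k"
  unfolding E_def using e_carrier by (simp add: lessThan_Suc Pi_def)

private lemma E_mult_e: "E k \<otimes> e k = \<zero>"
proof -
  have "E k \<otimes> e k = finsum R (\<lambda>j. e j \<otimes> e k) {..<k}"
    unfolding E_def by (rule finsum_ldistr) (use e_carrier in auto)
  also have "\<dots> = \<zero>" by (rule add.finprod_one_eqI) (simp add: e(4))
  finally show ?thesis .
qed

private lemma e_mult_E: "e k \<otimes> E k = \<zero>"
proof -
  have "e k \<otimes> E k = finsum R (\<lambda>j. e k \<otimes> e j) {..<k}"
    unfolding E_def by (rule finsum_rdistr) (use e_carrier in auto)
  also have "\<dots> = \<zero>" by (rule add.finprod_one_eqI) (simp add: e(4))
  finally show ?thesis .
qed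

lemma orthogonal_idempotents_not_left_noetherian: "\<not> left_noetherian R S"
proof -
  define J where "J k = {a \<in> S. a \<otimes> E k = a}" for k
  have "left_ideal_of R S (J k)" for k
  proof -
    have "additive_subgroup (J k) R"
    proof (rule additive_subgroupI, rule add.subgroupI)
      show "J k \<subseteq> carrier R" using S_carrier by (auto simp: J_def)
      show "J k \<noteq> {}" using E_carrier additive_subgroup.zero_closed[OF S(1)] by (auto simp: J_def)
      show "\<ominus> a \<in> J k" if "a \<in> J k" for a
        using that E_carrier S_carrier additive_subgroup.a_inv_closed[OF S(1)]
        by (simp add: J_def l_minus)
      show "a \<oplus> b \<in> J k" if "a \<in> J k" "b \<in> J k" for a b
        using that E_carrier S_carrier additive_subgroup.a_closed[OF S(1)]
        by (simp add: J_def l_distr)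
    qed
    then show ?thesis
      using E_carrier S_carrier S(2) by (auto simp: left_ideal_of_def J_def m_assoc)
  qed
  moreover have "J k \<subseteq> J (Suc k)" for k
  proof
    fix a assume a: "a \<in> J k"
    then have ac: "a \<in> carrier R" and aE: "a \<otimes> E k = a" using S_carrier by (auto simp: J_def)
    have "a \<otimes> e k = a \<otimes> (E k \<otimes> e k)" using aE ac E_carrier e_carrier by (metis m_assoc)
    then have "a \<otimes> e k = \<zero>" using ac by (simp add: E_mult_e)
    then show "a \<in> J (Suc k)"
      using a S_carrier E_carrier e_carrier by (simp add: J_def E_Suc r_distr)
  qed
  moreover have "e k \<in> J (Suc k)" "e k \<notin> J k" for k
    using e E_carrier e_carrier by (simp_all add: J_def E_Suc r_distr e_mult_E not_sym)
  ultimately show ?thesis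
    unfolding left_noetherian_def using chain_not_stable[of J e] by blast
qed

lemma orthogonal_idempotents_not_right_noetherian: "\<not> right_noetherian R S"
proof -
  define J where "J k = {a \<in> S. E k \<otimes> a = a}" for k
  have "right_ideal_of R S (J k)" for k
  proof -
    have "additive_subgroup (J k) R"
    proof (rule additive_subgroupI, rule add.subgroupI)
      show "J k \<subseteq> carrier R" using S_carrier by (auto simp: J_def)
      show "J k \<noteq> {}" using E_carrier additive_subgroup.zero_closed[OF S(1)] by (auto simp: J_def)
      show "\<ominus> a \<in> J k" if "a \<in> J k" for a
        using that E_carrier S_carrier additive_subgroup.a_inv_closed[OF S(1)]
        by (simp add: J_def r_minus)
      show "a \<oplus> b \<in> J k" if "a \<in> J k" "b \<in> J k" for a b
        using that E_carrier S_carrier additive_subgroup.a_closed[OF S(1)]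
        by (simp add: J_def r_distr)
    qed
    then show ?thesis
      using E_carrier S_carrier S(2) by (auto simp: right_ideal_of_def J_def m_assoc[symmetric])
  qed
  moreover have "J k \<subseteq> J (Suc k)" for k
  proof
    fix a assume a: "a \<in> J k"
    then have ac: "a \<in> carrier R" and Ea: "E k \<otimes> a = a" using S_carrier by (auto simp: J_def)
    have "e k \<otimes> a = e k \<otimes> E k \<otimes> a" using Ea ac E_carrier e_carrier by (metis m_assoc)
    then have "e k \<otimes> a = \<zero>" using ac by (simp add: e_mult_E)
    then show "a \<in> J (Suc k)"
      using a S_carrier E_carrier e_carrier by (simp add: J_def E_Suc l_distr)
  qed
  moreover have "e k \<in> J (Suc k)" "e k \<notin> J k" for k
    using e E_carrier e_carrier by (simp_all add: J_def E_Suc l_distr E_mult_e not_sym)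
  ultimately show ?thesis
    unfolding right_noetherian_def using chain_not_stable[of J e] by blast
qed

end

end

section \<open>A cycle with an exit yields infinitely many orthogonal idempotents\<close>

lemma (in leavitt_graph) cycle_with_exit_if_not_cond_NE:
  assumes "\<not> cond_NE E1 s r"
  obtains c f i where "c \<noteq> []" "walk c" "s (c ! 0) = r (last c)"
    "f \<in> E1" "i < length c" "s f = s (c ! i)" "f \<noteq> c ! i"
  using assms unfolding cond_NE_def is_cycle_def has_exit_def edge_path_iff_walk by blast

text \<open>For m < n, exit_path m and exit_path n agree up to the edge where
  the first takes f and the second continues with c ! i; this is what makes their idempotents
  orthogonal.\<close>

locale cycle_with_exit = leavitt_graph R E0 E1 s r
  for R :: "('r, 'm) ring_scheme" (structure) and E0 :: "'v set" and E1 :: "'e set"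
    and s r :: "'e \<Rightarrow> 'v" +
  fixes c :: "'e list" and f :: 'e and i :: nat
  assumes one_neq_zero: "\<one> \<noteq> \<zero>"
    and cycle: "c \<noteq> []" "walk c" "s (c ! 0) = r (last c)"
    and exit: "f \<in> E1" "i < length c" "s f = s (c ! i)" "f \<noteq> c ! i"
begin

definition cycle_power :: "nat \<Rightarrow> 'e list" where
  "cycle_power n = concat (replicate n c)"

lemma cycle_power_0 [simp]: "cycle_power 0 = []"
  and cycle_power_Suc: "cycle_power (Suc n) = c @ cycle_power n"
  by (simp_all add: cycle_power_def)

lemma cycle_power_add: "cycle_power (m + k) = cycle_power m @ cycle_power k"
  by (simp add: cycle_power_def replicate_add)

lemma cycle_power_ends:
  "n > 0 \<Longrightarrow> cycle_power n \<noteq> [] \<and> hd (cycle_power n) = c ! 0 \<and> last (cycle_power n) = last c"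
proof (induction n)
  case (Suc n)
  then show ?case using cycle(1)
    by (cases "n = 0") (auto simp: cycle_power_Suc hd_conv_nth nth_append)
qed simp

lemma walk_cycle_power: "walk (cycle_power n)"
proof (induction n)
  case (Suc n)
  then show ?case
    using cycle cycle_power_ends[of n]
    by (cases "n = 0") (auto simp: cycle_power_Suc walk_append hd_conv_nth)
qed simp

lemma walk_exit: "walk (take i c @ [f])"
proof -
  have "walk (take i c)" using cycle(2) walk_append[of "take i c" "drop i c"] by simp
  moreover have "s f = r (last (take i c))" if "take i c \<noteq> []"
  proof -
    have "i \<noteq> 0" using that by auto
    then obtain j where j: "i = Suc j" by (cases i) auto
    have "last (take i c) = c ! j" using j exit(2) by (simp add: take_Suc_conv_app_nth)
    moreover have "s (c ! Suc j) = r (c ! j)" using cycle(2) exit(2) j by (simp add: walk_def)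
    ultimately show ?thesis using exit(3) j by simp
  qed
  ultimately show ?thesis using exit(1) by (auto simp: walk_append walk_Cons)
qed

lemma source_exit: "s (hd (take i c @ [f])) = s (c ! 0)"
  using exit(3) cycle(1) by (cases i) (auto simp: hd_conv_nth nth_append)

definition exit_path :: "nat \<Rightarrow> 'e list" where
  "exit_path n = cycle_power n @ take i c @ [f]"

lemma walk_exit_path: "walk (exit_path n)"
proof -
  have "s (hd (take i c @ [f])) = r (last (cycle_power n))" if "cycle_power n \<noteq> []"
    using that cycle_power_ends[of n] source_exit cycle(3) by (cases n) auto
  then show ?thesis using walk_cycle_power walk_exit by (simp add: exit_path_def walk_append)
qed

lemma walk_to_exit_path: "walk_to (r f) (exit_path n)"
  using walk_exit_path by (simp add: walk_to_def exit_path_def)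

lemma source_exit_path: "s (hd (exit_path n)) = s (c ! 0)"
  using cycle_power_ends[of n] source_exit by (cases n) (auto simp: exit_path_def)

lemma exit_paths_diverge:
  assumes "m < n"
  obtains p rest where "exit_path m = p @ [f]" "exit_path n = p @ c ! i # rest"
proof -
  obtain k where n: "n = m + Suc k" using assms by (metis less_iff_Suc_add add_Suc_right)
  have "cycle_power n = cycle_power m @ c @ cycle_power k"
    unfolding n cycle_power_add cycle_power_Suc ..
  then have "exit_path n = cycle_power m @ c @ cycle_power k @ take i c @ [f]"
    by (simp add: exit_path_def)
  also have "\<dots> = cycle_power m @ (take i c @ c ! i # drop (Suc i) c) @ cycle_power k @ take i c @ [f]"
    using id_take_nth_drop[OF exit(2)]
    by (rule arg_cong[where f="\<lambda>z. cycle_power m @ z @ cycle_power k @ take i c @ [f]"])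
  finally have "exit_path n = (cycle_power m @ take i c) @ c ! i #
      (drop (Suc i) c @ cycle_power k @ take i c @ [f])"
    by simp
  moreover have "exit_path m = (cycle_power m @ take i c) @ [f]"
    by (simp add: exit_path_def)
  ultimately show ?thesis using that by blast
qed

definition exit_path_from :: "nat \<Rightarrow> 'v \<times> 'e list" where
  "exit_path_from n = (s (c ! 0), exit_path n)"

lemma is_path_exit_path_from: "is_path E0 E1 s r (exit_path_from n)"
proof -
  have "c ! 0 \<in> E1" using cycle(1) walk_edges[OF cycle(2)] by (simp add: subset_iff)
  then show ?thesis
    using walk_exit_path source_exit_path source_in_E0
    by (auto simp: is_path_iff_walk exit_path_from_def exit_path_def)
qed

definition idem :: "nat \<Rightarrow> (('v, 'e) gen list \<Rightarrow> 'r) set" where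
  "idem n = cl (wmono R (pword (exit_path_from n) @ pword_star (exit_path_from n)) \<one>)"

lemma idem_eq_monomial: "idem n = cl (wmono R (monomial (r f) (exit_path n) (exit_path n)) \<one>)"
proof -
  have "exit_path n \<noteq> []" by (simp add: exit_path_def)
  moreover have "word_eq (map Ed (exit_path n) @ map Gh (rev (exit_path n)))
      (monomial (r f) (exit_path n) (exit_path n))"
    using word_eq_monomial[of "exit_path n" "exit_path n" "r f"] walk_to_exit_path
      range_in_E0[OF exit(1)] by (simp add: exit_path_def)
  ultimately show ?thesis
    using word_eq_cls[of _ _ \<one>] by (simp add: idem_def exit_path_from_def pword_def pword_star_def)
qed

lemma idem_in_monomial_classes: "idem n \<in> monomial_classes"
  unfolding idem_eq_monomial monomial_classes_def
  using range_in_E0[OF exit(1)] walk_to_exit_path by blast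

lemma idem_LPA0: "idem n \<in> LPA0 R E0 E1 s r"
  using idem_in_monomial_classes monomial_classes_subset_LPA0 by auto

lemma idem_nonzero: "idem n \<noteq> \<zero>\<^bsub>L\<^esub>"
proof -
  have "exit_path n \<noteq> []" by (simp add: exit_path_def)
  moreover have "gen_word (map Ed (exit_path n) @ map Gh (rev (exit_path n)))"
    using walk_edges[OF walk_exit_path] by simp
  ultimately show ?thesis
    using wmono_walk_ghost_notin_leavitt_ideal[OF one_neq_zero _ walk_exit_path]
      cls_eq_zero_iff[OF wmono_free_alg_carrier]
    by (simp add: idem_def exit_path_from_def pword_def pword_star_def)
qed

lemma idem_mult:
  "idem m \<otimes>\<^bsub>L\<^esub> idem n
    = cl (wmono R (monomial (r f) (exit_path m) (exit_path m) @ monomial (r f) (exit_path n) (exit_path n)) \<one>)"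
  using gen_word_monomial range_in_E0[OF exit(1)] walk_to_exit_path cls_wmono_append[of _ _ \<one> \<one>]
  by (simp add: idem_eq_monomial)

lemma idem_idem: "idem n \<otimes>\<^bsub>L\<^esub> idem n = idem n"
proof -
  let ?a = "exit_path n"
  have E: "set ?a \<subseteq> E1" using walk_edges[OF walk_exit_path] .
  have v: "r f \<in> E0" using range_in_E0[OF exit(1)] .
  have "word_eq (monomial (r f) ?a ?a @ monomial (r f) ?a ?a)
      (map Ed ?a @ [V (r f)] @ [V (r f)] @ map Gh (rev ?a))"
    by (rule word_eq_contextI[OF word_eq_vertex_ghost_walk[OF v walk_to_exit_path],
          of "map Ed ?a" "[V (r f)] @ map Gh (rev ?a)"])
       (use E v in \<open>auto simp: monomial_def\<close>)
  also have "word_eq \<dots> (monomial (r f) ?a ?a)"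
    by (rule word_eq_contextI[OF word_eq_VV[OF v], of "map Ed ?a" "map Gh (rev ?a)"])
       (use E in \<open>auto simp: monomial_def\<close>)
  finally have "cl (wmono R (monomial (r f) ?a ?a @ monomial (r f) ?a ?a) \<one>) = idem n"
    unfolding idem_eq_monomial by (rule word_eq_cls[OF _ one_closed])
  then show ?thesis by (simp only: idem_mult)
qed

lemma idem_orthogonal: "m \<noteq> n \<Longrightarrow> idem m \<otimes>\<^bsub>L\<^esub> idem n = \<zero>\<^bsub>L\<^esub>"
proof -
  assume "m \<noteq> n"
  note diverge = monomial_mult_diverge[OF range_in_E0[OF exit(1)] range_in_E0[OF exit(1)]
      walk_to_exit_path walk_to_exit_path walk_to_exit_path walk_to_exit_path]
  have "word_zero (monomial (r f) (exit_path m) (exit_path m) @ monomial (r f) (exit_path n) (exit_path n))"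
  proof (cases "m < n")
    case True
    then show ?thesis using exit_paths_diverge exit(4) diverge by metis
  next
    case False
    then have "n < m" using \<open>m \<noteq> n\<close> by simp
    then show ?thesis using exit_paths_diverge exit(4) diverge by metis
  qed
  then show ?thesis using word_zero_cls[OF _ one_closed] by (simp add: idem_mult)
qed

lemma inj_idem: "inj idem"
proof
  fix m n assume "idem m = idem n"
  then show "m = n" using idem_orthogonal[of m n] idem_idem[of n] idem_nonzero[of n] by auto
qed

end

theorem proposition4p7:
  fixes R :: "('r, 'm) ring_scheme"
    and E0 :: "'v set" and E1 :: "'e set" and s r :: "'e \<Rightarrow> 'v"
  assumes "ring R" and "\<one>\<^bsub>R\<^esub> \<noteq> \<zero>\<^bsub>R\<^esub>"
    and "graph E0 E1 s r"
    and "\<not> cond_NE E1 s r"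
  shows "(\<exists>\<mu> :: nat \<Rightarrow> 'v \<times> 'e list.
            (\<forall>n. is_path E0 E1 s r (\<mu> n)) \<and>
            (\<forall>n. cls R E0 E1 s r (wmono R (pword (\<mu> n) @ pword_star (\<mu> n)) \<one>\<^bsub>R\<^esub>)
                   \<in> LPA0 R E0 E1 s r) \<and>
            (\<forall>n. cls R E0 E1 s r (wmono R (pword (\<mu> n) @ pword_star (\<mu> n)) \<one>\<^bsub>R\<^esub>)
                   \<otimes>\<^bsub>LPA R E0 E1 s r\<^esub>
                 cls R E0 E1 s r (wmono R (pword (\<mu> n) @ pword_star (\<mu> n)) \<one>\<^bsub>R\<^esub>)
               = cls R E0 E1 s r (wmono R (pword (\<mu> n) @ pword_star (\<mu> n)) \<one>\<^bsub>R\<^esub>)) \<and>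
            inj (\<lambda>n. cls R E0 E1 s r (wmono R (pword (\<mu> n) @ pword_star (\<mu> n)) \<one>\<^bsub>R\<^esub>)) \<and>
            (\<forall>m n. m \<noteq> n \<longrightarrow>
               cls R E0 E1 s r (wmono R (pword (\<mu> m) @ pword_star (\<mu> m)) \<one>\<^bsub>R\<^esub>)
                   \<otimes>\<^bsub>LPA R E0 E1 s r\<^esub>
                 cls R E0 E1 s r (wmono R (pword (\<mu> n) @ pword_star (\<mu> n)) \<one>\<^bsub>R\<^esub>)
               = \<zero>\<^bsub>LPA R E0 E1 s r\<^esub>))
         \<and> \<not> left_noetherian (LPA R E0 E1 s r) (LPA0 R E0 E1 s r)
         \<and> \<not> right_noetherian (LPA R E0 E1 s r) (LPA0 R E0 E1 s r)"
proof -
  interpret leavitt_graph R E0 E1 s r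
    using assms(1,3) by (simp add: leavitt_graph_def leavitt_graph_axioms_def)
  obtain c f i where cycle: "c \<noteq> []" "walk c" "s (c ! 0) = r (last c)"
    and exit: "f \<in> E1" "i < length c" "s f = s (c ! i)" "f \<noteq> c ! i"
    using cycle_with_exit_if_not_cond_NE[OF assms(4)] .
  interpret cycle_with_exit R E0 E1 s r c f i
    using leavitt_graph_axioms assms(2) cycle exit
    by (simp add: cycle_with_exit_def cycle_with_exit_axioms_def)
  have idempotents: "(\<forall>n. is_path E0 E1 s r (exit_path_from n)) \<and> (\<forall>n. idem n \<in> LPA0 R E0 E1 s r) \<and>
      (\<forall>n. idem n \<otimes>\<^bsub>L\<^esub> idem n = idem n) \<and> inj idem \<and>
      (\<forall>m n. m \<noteq> n \<longrightarrow> idem m \<otimes>\<^bsub>L\<^esub> idem n = \<zero>\<^bsub>L\<^esub>)"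
    using is_path_exit_path_from idem_LPA0 idem_idem inj_idem idem_orthogonal by blast
  have "\<not> left_noetherian L (LPA0 R E0 E1 s r)" "\<not> right_noetherian L (LPA0 R E0 E1 s r)"
    using L.orthogonal_idempotents_not_left_noetherian L.orthogonal_idempotents_not_right_noetherian
      additive_subgroup_LPA0 LPA0_mult idem_LPA0 idem_idem idem_nonzero idem_orthogonal
    by blast+
  then show ?thesis
    using idempotents[unfolded idem_def] by (intro conjI exI[of _ exit_path_from]) blast+
qed

end
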